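(* Let $\omega$ be an L-obstacle. If $\omega$ has a diagonal $d$, then $\{d\}$ is a minimum skeleton for $\omega$. Otherwise, there is a cross of $\omega$ that is a minimum skeleton for $\omega$.
   Context: An obstacle $\omega$ is a simple polygon in $\mathbb{R}^2$ (a closed, bounded polygonal region without holes whose boundary does not intersect itself), assumed in general position (no three of its vertices are collinear); vertices and edges of $\omega$ are those of its boundary. $\omega$ is rectilinear if each edge is horizontal or vertical, and a rectilinear obstacle is rectilinearly-convex if any two points of $\omega$ can be joined by a shortest rectilinear path (made of horizontal and vertical segments, of minimum $\ell_1$ length) contained in $\omega$. A corner point of a rectilinear path is a point where a horizontal and a vertical segment of the path meet. A set $S$ of closed line segments is inside $\omega$ if the union of its elements is contained in $\omega$. Such an $S$ is a skeleton for $\omega$ if for every pair of points $p,q$ not in the interior of $\omega$ such that every shortest rectilinear path between $p$ and $q$ with at most one corner point meets the interior of $\omega$, each such path intersects some element of $S$; a minimum skeleton is one with the fewest segments. $B(\omega)$ is the smallest closed axis-parallel rectangle containing $\omega$; the extreme edges are the edges of $\omega$ lying on the boundary of $B(\omega)$ (exactly four: left, right, bottom, top); an extreme corner is a vertex of $\omega$ that is a common endpoint of two extreme edges. An L-obstacle is a rectilinearly-convex obstacle with exactly three extreme corners. A diagonal is a line segment contained in $\omega$ joining two diagonally opposite extreme corners. A cross of $\omega$ is a pair $\{s_H,s_V\}$ of line segments contained in $\omega$, where $s_H$ has one endpoint on each of the two horizontal extreme edges and $s_V$ has one endpoint on each of the two vertical extreme edges. *)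

theory Defs
  imports "HOL-Analysis.Analysis"
begin

type_synonym pt = "real \<times> real"

definition nxt :: "pt list \<Rightarrow> nat \<Rightarrow> pt" where
  "nxt vs i = vs ! ((Suc i) mod length vs)"

definition edge_seg :: "pt list \<Rightarrow> nat \<Rightarrow> pt set" where
  "edge_seg vs i = closed_segment (vs ! i) (nxt vs i)"

definition poly_boundary :: "pt list \<Rightarrow> pt set" where
  "poly_boundary vs = (\<Union>i<length vs. edge_seg vs i)"

definition simple_polygon :: "pt list \<Rightarrow> bool" where
  "simple_polygon vs \<longleftrightarrow> length vs \<ge> 3 \<and> distinct vs \<and>
     (\<forall>i<length vs. \<forall>j<length vs. i \<noteq> j \<longrightarrow>
        (if j = Suc i mod length vs then edge_seg vs i \<inter> edge_seg vs j = {vs ! j}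
         else if i = Suc j mod length vs then edge_seg vs i \<inter> edge_seg vs j = {vs ! i}
         else edge_seg vs i \<inter> edge_seg vs j = {}))"

definition general_position :: "pt list \<Rightarrow> bool" where
  "general_position vs \<longleftrightarrow>
     (\<forall>a\<in>set vs. \<forall>b\<in>set vs. \<forall>c\<in>set vs.
        a \<noteq> b \<and> b \<noteq> c \<and> a \<noteq> c \<longrightarrow> \<not> collinear {a, b, c})"

definition region :: "pt list \<Rightarrow> pt set" where
  "region vs = poly_boundary vs \<union> inside (poly_boundary vs)"

definition obstacle :: "pt list \<Rightarrow> bool" where
  "obstacle vs \<longleftrightarrow> simple_polygon vs \<and> general_position vs"

definition rectilinear :: "pt list \<Rightarrow> bool" where
  "rectilinear vs \<longleftrightarrow>
     (\<forall>i<length vs. fst (vs ! i) = fst (nxt vs i) \<or> snd (vs ! i) = snd (nxt vs i))"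

definition rpath :: "pt list \<Rightarrow> bool" where
  "rpath ps \<longleftrightarrow> ps \<noteq> [] \<and>
     (\<forall>i. Suc i < length ps \<longrightarrow>
        fst (ps ! i) = fst (ps ! Suc i) \<or> snd (ps ! i) = snd (ps ! Suc i))"

definition rseg :: "pt list \<Rightarrow> nat \<Rightarrow> pt set" where
  "rseg ps i = closed_segment (ps ! i) (ps ! Suc i)"

definition rpath_set :: "pt list \<Rightarrow> pt set" where
  "rpath_set ps = set ps \<union> (\<Union>i\<in>{i. Suc i < length ps}. rseg ps i)"

definition l1dist :: "pt \<Rightarrow> pt \<Rightarrow> real" where
  "l1dist p q = \<bar>fst p - fst q\<bar> + \<bar>snd p - snd q\<bar>"

definition rlength :: "pt list \<Rightarrow> real" where
  "rlength ps = (\<Sum>i\<in>{i. Suc i < length ps}. l1dist (ps ! i) (ps ! Suc i))"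

definition rpath_between :: "pt \<Rightarrow> pt \<Rightarrow> pt list \<Rightarrow> bool" where
  "rpath_between p q ps \<longleftrightarrow> rpath ps \<and> hd ps = p \<and> last ps = q"

definition shortest_rpath :: "pt \<Rightarrow> pt \<Rightarrow> pt list \<Rightarrow> bool" where
  "shortest_rpath p q ps \<longleftrightarrow> rpath_between p q ps \<and>
     (\<forall>ps'. rpath_between p q ps' \<longrightarrow> rlength ps \<le> rlength ps')"

definition horiz_seg :: "pt list \<Rightarrow> nat \<Rightarrow> bool" where
  "horiz_seg ps i \<longleftrightarrow> Suc i < length ps \<and> snd (ps ! i) = snd (ps ! Suc i) \<and> fst (ps ! i) \<noteq> fst (ps ! Suc i)"

definition vert_seg :: "pt list \<Rightarrow> nat \<Rightarrow> bool" where
  "vert_seg ps i \<longleftrightarrow> Suc i < length ps \<and> fst (ps ! i) = fst (ps ! Suc i) \<and> snd (ps ! i) \<noteq> snd (ps ! Suc i)"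

definition corner_points :: "pt list \<Rightarrow> pt set" where
  "corner_points ps = {x. \<exists>i j. horiz_seg ps i \<and> vert_seg ps j \<and> x \<in> rseg ps i \<and> x \<in> rseg ps j}"

definition at_most_one_corner :: "pt list \<Rightarrow> bool" where
  "at_most_one_corner ps \<longleftrightarrow> (\<forall>x\<in>corner_points ps. \<forall>y\<in>corner_points ps. x = y)"

definition rect_convex :: "pt set \<Rightarrow> bool" where
  "rect_convex \<omega> \<longleftrightarrow>
     (\<forall>p\<in>\<omega>. \<forall>q\<in>\<omega>. \<exists>ps. shortest_rpath p q ps \<and> rpath_set ps \<subseteq> \<omega>)"

definition is_segment :: "pt set \<Rightarrow> bool" where
  "is_segment s \<longleftrightarrow> (\<exists>a b. a \<noteq> b \<and> s = closed_segment a b)"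

definition skeleton :: "pt set \<Rightarrow> pt set set \<Rightarrow> bool" where
  "skeleton \<omega> S \<longleftrightarrow> (\<forall>s\<in>S. is_segment s) \<and> \<Union>S \<subseteq> \<omega> \<and>
     (\<forall>p q. p \<notin> interior \<omega> \<and> q \<notin> interior \<omega> \<and>
        (\<forall>ps. shortest_rpath p q ps \<and> at_most_one_corner ps \<longrightarrow>
              rpath_set ps \<inter> interior \<omega> \<noteq> {}) \<longrightarrow>
        (\<forall>ps. shortest_rpath p q ps \<and> at_most_one_corner ps \<longrightarrow>
              (\<exists>s\<in>S. rpath_set ps \<inter> s \<noteq> {})))"

definition min_skeleton :: "pt set \<Rightarrow> pt set set \<Rightarrow> bool" where
  "min_skeleton \<omega> S \<longleftrightarrow> finite S \<and> skeleton \<omega> S \<and>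
     (\<forall>S'. finite S' \<and> skeleton \<omega> S' \<longrightarrow> card S \<le> card S')"

definition bbox :: "pt set \<Rightarrow> pt set" where
  "bbox \<omega> = cbox (Inf (fst ` \<omega>), Inf (snd ` \<omega>)) (Sup (fst ` \<omega>), Sup (snd ` \<omega>))"

definition extreme_edge :: "pt list \<Rightarrow> nat \<Rightarrow> bool" where
  "extreme_edge vs i \<longleftrightarrow> i < length vs \<and> edge_seg vs i \<subseteq> frontier (bbox (region vs))"

definition extreme_corner :: "pt list \<Rightarrow> pt \<Rightarrow> bool" where
  "extreme_corner vs v \<longleftrightarrow> v \<in> set vs \<and>
     (\<exists>i j. i \<noteq> j \<and> extreme_edge vs i \<and> extreme_edge vs j \<and>
            v \<in> {vs ! i, nxt vs i} \<and> v \<in> {vs ! j, nxt vs j})"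

definition L_obstacle :: "pt list \<Rightarrow> bool" where
  "L_obstacle vs \<longleftrightarrow> obstacle vs \<and> rectilinear vs \<and> rect_convex (region vs) \<and>
     card {v. extreme_corner vs v} = 3"

text \<open>Extreme corners are corners of the bounding box, so two of them are diagonally
  opposite iff they differ in both coordinates.\<close>
definition diagonal :: "pt list \<Rightarrow> pt set \<Rightarrow> bool" where
  "diagonal vs d \<longleftrightarrow> (\<exists>a b. extreme_corner vs a \<and> extreme_corner vs b \<and>
      fst a \<noteq> fst b \<and> snd a \<noteq> snd b \<and>
      d = closed_segment a b \<and> d \<subseteq> region vs)"

definition horiz_edge :: "pt list \<Rightarrow> nat \<Rightarrow> bool" where
  "horiz_edge vs i \<longleftrightarrow> snd (vs ! i) = snd (nxt vs i)"

definition vert_edge :: "pt list \<Rightarrow> nat \<Rightarrow> bool" where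
  "vert_edge vs i \<longleftrightarrow> fst (vs ! i) = fst (nxt vs i)"

definition cross :: "pt list \<Rightarrow> pt set set \<Rightarrow> bool" where
  "cross vs S \<longleftrightarrow> (\<exists>sH sV. S = {sH, sV} \<and> is_segment sH \<and> is_segment sV \<and>
      sH \<subseteq> region vs \<and> sV \<subseteq> region vs \<and>
      (\<exists>i j a b. i \<noteq> j \<and> extreme_edge vs i \<and> extreme_edge vs j \<and>
          horiz_edge vs i \<and> horiz_edge vs j \<and>
          a \<in> edge_seg vs i \<and> b \<in> edge_seg vs j \<and> sH = closed_segment a b) \<and>
      (\<exists>i j a b. i \<noteq> j \<and> extreme_edge vs i \<and> extreme_edge vs j \<and>
          vert_edge vs i \<and> vert_edge vs j \<and>
          a \<in> edge_seg vs i \<and> b \<in> edge_seg vs j \<and> sV = closed_segment a b))"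

end

theory Submission
  imports Defs
begin

text \<open>
  Let \<open>B\<close> be the bounding box of the L-obstacle. Exactly one corner \<open>M\<close> of \<open>B\<close> is missing
  from the obstacle; let \<open>O\<close> be the opposite corner. Rectilinear convexity makes the obstacle a
  staircase anchored at \<open>O\<close>: with every point \<open>u\<close> it contains the rectangle spanned by \<open>O\<close>
  and \<open>u\<close>. After reflecting the axes, \<open>O\<close> is the lower left and \<open>M\<close> the upper right
  corner of \<open>B\<close>.

  A shortest rectilinear path with at most one corner from \<open>p\<close> to \<open>q\<close> contains one of the two
  elbows (two-segment axis-parallel paths) from \<open>p\<close> to \<open>q\<close>. If \<open>p\<close> and \<open>q\<close> lie outside
  the interior while both elbows meet it, a case analysis on the position of \<open>p\<close> and \<open>q\<close>
  shows that each elbow contains a path that starts on a side of \<open>B\<close> at \<open>O\<close> and reaches,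
  within the closed quadrant at \<open>O\<close>, a non-interior point of the open quadrant. Such a path
  meets the two sides at \<open>O\<close>, which therefore form a skeleton (a cross). It also crosses the
  diagonal of \<open>B\<close> through the two other corners whenever that diagonal lies in the obstacle,
  because then every point of the open quadrant strictly below the diagonal is interior.

  Conversely, a skeleton must meet every horizontal and every vertical line through the
  interior. So it is never empty, and a skeleton made of a single segment spans \<open>B\<close> from
  corner to corner, i.e. it is a diagonal.
\<close>

section \<open>Axis-parallel segments\<close>

lemma mem_closed_segment_real:
  "(t::real) \<in> closed_segment a b \<longleftrightarrow> min a b \<le> t \<and> t \<le> max a b"
  by (auto simp: closed_segment_eq_real_ivl min_def max_def)

lemma mem_horizontal_segment:
  fixes a b z :: pt
  assumes "snd a = snd b"
  shows "z \<in> closed_segment a b \<longleftrightarrow>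
    snd z = snd a \<and> min (fst a) (fst b) \<le> fst z \<and> fst z \<le> max (fst a) (fst b)"
  using assms by (cases z) (auto simp: closed_segment_same_snd mem_closed_segment_real)

lemma mem_vertical_segment:
  fixes a b z :: pt
  assumes "fst a = fst b"
  shows "z \<in> closed_segment a b \<longleftrightarrow>
    fst z = fst a \<and> min (snd a) (snd b) \<le> snd z \<and> snd z \<le> max (snd a) (snd b)"
  using assms by (cases z) (auto simp: closed_segment_same_fst mem_closed_segment_real)

lemma closed_segment_coord_bounds:
  fixes a b z :: pt
  assumes "z \<in> closed_segment a b"
  shows "min (fst a) (fst b) \<le> fst z \<and> fst z \<le> max (fst a) (fst b) \<and>
         min (snd a) (snd b) \<le> snd z \<and> snd z \<le> max (snd a) (snd b)"
  using closed_segment_PairD[of "fst z" "snd z" "fst a" "snd a" "fst b" "snd b"] assms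
  by (simp add: mem_closed_segment_real)

lemma axis_segment_split:
  fixes a b c :: pt
  assumes "f \<in> {fst, snd}" "f a = f b" "f b = f c"
  shows "closed_segment a c \<subseteq> closed_segment a b \<union> closed_segment b c"
  using assms
  by (auto simp: mem_horizontal_segment mem_vertical_segment min_def max_def split: if_splits)

lemma mem_cbox_pair:
  "(z::pt) \<in> cbox (a, b) (c, d) \<longleftrightarrow> a \<le> fst z \<and> fst z \<le> c \<and> b \<le> snd z \<and> snd z \<le> d"
  by (cases z) (simp add: cbox_Pair_eq)

lemma mem_box_pair:
  "(z::pt) \<in> box (a, b) (c, d) \<longleftrightarrow> a < fst z \<and> fst z < c \<and> b < snd z \<and> snd z < d"
  by (cases z) (auto simp: mem_box Basis_prod_def)

lemma box_frontierI:
  fixes w :: pt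
  assumes "w \<in> cbox (x0, y0) (x1, y1)" "fst w \<in> {x0, x1} \<or> snd w \<in> {y0, y1}"
  shows "w \<in> frontier (cbox (x0, y0) (x1, y1))"
  using assms unfolding frontier_cbox by (auto simp: mem_box_pair)

lemma sign_bounds_imp_segment:
  fixes s a b t :: real
  assumes "\<bar>s\<bar> = 1" "s * a \<le> s * t" "s * t \<le> s * b"
  shows "t \<in> closed_segment a b"
proof -
  have "s = 1 \<or> s = -1" using assms(1) by auto
  then show ?thesis using assms(2,3) by (auto simp: mem_closed_segment_real)
qed

lemma collinear_axis_parallel:
  fixes a b c :: pt
  assumes "f \<in> {fst, snd}" "f a = f b" "f b = f c"
  shows "collinear {a, b, c}"
  using assms unfolding collinear_def
proof (elim insertE)
  assume "f = fst" "f a = f b" "f b = f c"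
  then show "\<exists>u. \<forall>x\<in>{a, b, c}. \<forall>y\<in>{a, b, c}. \<exists>t. x - y = t *\<^sub>R u"
    by (intro exI[of _ "(0, 1)"]) (auto intro!: exI[of _ "snd _ - snd _"] simp: prod_eq_iff)
next
  assume "f = snd" "f a = f b" "f b = f c"
  then show "\<exists>u. \<forall>x\<in>{a, b, c}. \<forall>y\<in>{a, b, c}. \<exists>t. x - y = t *\<^sub>R u"
    by (intro exI[of _ "(1, 0)"]) (auto intro!: exI[of _ "fst _ - fst _"] simp: prod_eq_iff)
qed simp

lemma endpoints_span_interval:
  fixes lo hi a b :: real
  assumes "lo < hi" "lo \<le> a" "a \<le> hi" "lo \<le> b" "b \<le> hi"
    and between: "\<And>t. lo < t \<Longrightarrow> t < hi \<Longrightarrow> min a b \<le> t \<and> t \<le> max a b"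
  shows "{a, b} = {lo, hi}"
proof -
  have "min a b \<le> lo"
  proof (rule ccontr)
    assume "\<not> min a b \<le> lo"
    moreover have "min a b \<le> hi" using assms(3) by simp
    ultimately have "min a b \<le> (lo + min a b) / 2"
      using between[of "(lo + min a b) / 2"] assms(1) by (auto simp: min_def split: if_splits)
    then show False using \<open>\<not> min a b \<le> lo\<close> by simp
  qed
  moreover have "hi \<le> max a b"
  proof (rule ccontr)
    assume "\<not> hi \<le> max a b"
    moreover have "lo \<le> max a b" using assms(2) by simp
    ultimately have "(hi + max a b) / 2 \<le> max a b"
      using between[of "(hi + max a b) / 2"] assms(1) by (auto simp: max_def split: if_splits)
    then show False using \<open>\<not> hi \<le> max a b\<close> by simp
  qed
  ultimately show ?thesis using assms(1-5) by (auto simp: min_def max_def split: if_splits)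
qed

section \<open>Shortest rectilinear paths\<close>

definition elbow :: "pt \<Rightarrow> pt \<Rightarrow> pt \<Rightarrow> pt set" where
  "elbow p c q = closed_segment p c \<union> closed_segment c q"

definition elbow_corners :: "pt \<Rightarrow> pt \<Rightarrow> pt set" where
  "elbow_corners p q = {(fst q, snd p), (fst p, snd q)}"

lemma elbow_commute: "elbow p c q = elbow q c p"
  unfolding elbow_def by (auto simp: closed_segment_commute)

lemma elbow_corners_commute: "elbow_corners p q = elbow_corners q p"
  unfolding elbow_corners_def by auto

lemma rlength_eq_coord_sums:
  "rlength ps = (\<Sum>i<length ps - 1. \<bar>fst (ps!Suc i) - fst (ps!i)\<bar>)
              + (\<Sum>i<length ps - 1. \<bar>snd (ps!Suc i) - snd (ps!i)\<bar>)"
proof -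
  have "{i. Suc i < length ps} = {..<length ps - 1}" by auto
  then show ?thesis
    unfolding rlength_def l1dist_def by (simp add: abs_minus_commute sum.distrib)
qed

lemma coord_telescope:
  "ps \<noteq> [] \<Longrightarrow> f (last ps) - f (hd ps) = (\<Sum>i<length ps - 1. f (ps!Suc i) - f (ps!i))"
  for f :: "pt \<Rightarrow> real"
  by (simp add: hd_conv_nth last_conv_nth sum_lessThan_telescope[where f="\<lambda>i. f (ps!i)"])

lemma coord_variation_ge:
  "ps \<noteq> [] \<Longrightarrow> \<bar>f (last ps) - f (hd ps)\<bar> \<le> (\<Sum>i<length ps - 1. \<bar>f (ps!Suc i) - f (ps!i)\<bar>)"
  for f :: "pt \<Rightarrow> real"
  unfolding coord_telescope[of ps f] by (rule sum_abs)

lemma rlength_ge_l1dist: "ps \<noteq> [] \<Longrightarrow> l1dist (hd ps) (last ps) \<le> rlength ps"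
  unfolding rlength_eq_coord_sums l1dist_def
  using coord_variation_ge[of ps fst] coord_variation_ge[of ps snd]
  by (simp add: abs_minus_commute)

lemma elbow_path:
  assumes c: "c \<in> elbow_corners p q"
  shows "shortest_rpath p q [p, c, q]" "at_most_one_corner [p, c, q]"
    "rpath_set [p, c, q] = elbow p c q" "rlength [p, c, q] = l1dist p q"
proof -
  have c': "c = (fst q, snd p) \<or> c = (fst p, snd q)" using c unfolding elbow_corners_def by auto
  have rp: "rpath [p, c, q]" unfolding rpath_def using c'
    by (auto simp: less_Suc_eq nth_Cons split: nat.splits)
  have idx: "{i. Suc i < length [p, c, q]} = {0, 1}" by auto
  have "rlength [p, c, q] = l1dist p c + l1dist c q" unfolding rlength_def idx by simp
  also have "\<dots> = l1dist p q" using c' unfolding l1dist_def by auto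
  finally show "rlength [p, c, q] = l1dist p q" .
  then show "shortest_rpath p q [p, c, q]"
    unfolding shortest_rpath_def rpath_between_def using rp rlength_ge_l1dist
    by (fastforce simp: rpath_def)
  show "rpath_set [p, c, q] = elbow p c q"
    unfolding rpath_set_def idx elbow_def rseg_def by auto
  have meet: "x = c" if "x \<in> closed_segment p c" "x \<in> closed_segment c q" for x
    using c' that by (auto simp: mem_horizontal_segment mem_vertical_segment prod_eq_iff)
  have "x = c" if x: "x \<in> corner_points [p, c, q]" for x
  proof -
    obtain i j where ij: "horiz_seg [p, c, q] i" "vert_seg [p, c, q] j"
      "x \<in> rseg [p, c, q] i" "x \<in> rseg [p, c, q] j"
      using x unfolding corner_points_def by blast
    then have "i < 2" "j < 2" "i \<noteq> j" unfolding horiz_seg_def vert_seg_def by auto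
    then have "{i, j} = {0, 1}" by auto
    then show "x = c" using ij(3,4) meet[of x] unfolding rseg_def by (auto simp: doubleton_eq_iff)
  qed
  then show "at_most_one_corner [p, c, q]" unfolding at_most_one_corner_def by blast
qed

lemma shortest_rpath_rlength:
  assumes "shortest_rpath p q ps"
  shows "rlength ps = l1dist p q"
proof -
  have "(fst q, snd p) \<in> elbow_corners p q" unfolding elbow_corners_def by simp
  then have "rlength ps \<le> rlength [p, (fst q, snd p), q]"
    using assms elbow_path(1) unfolding shortest_rpath_def by blast
  also have "\<dots> = l1dist p q"
    using \<open>(fst q, snd p) \<in> elbow_corners p q\<close> by (rule elbow_path(4))
  finally show ?thesis using rlength_ge_l1dist[of ps] assms
    unfolding shortest_rpath_def rpath_between_def rpath_def by auto
qed

lemma shortest_rpath_coord_variation: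
  assumes s: "shortest_rpath p q ps" and f: "f \<in> {fst, snd}"
  shows "(\<Sum>i<length ps - 1. \<bar>f (ps!Suc i) - f (ps!i)\<bar>) = \<bar>f q - f p\<bar>"
proof -
  have ne: "ps \<noteq> []" and hl: "hd ps = p" "last ps = q"
    using s unfolding shortest_rpath_def rpath_between_def rpath_def by auto
  have "(\<Sum>i<length ps - 1. \<bar>fst (ps!Suc i) - fst (ps!i)\<bar>)
      + (\<Sum>i<length ps - 1. \<bar>snd (ps!Suc i) - snd (ps!i)\<bar>) = \<bar>fst q - fst p\<bar> + \<bar>snd q - snd p\<bar>"
    using shortest_rpath_rlength[OF s] unfolding rlength_eq_coord_sums l1dist_def
    by (simp add: abs_minus_commute)
  moreover have "\<bar>fst q - fst p\<bar> \<le> (\<Sum>i<length ps - 1. \<bar>fst (ps!Suc i) - fst (ps!i)\<bar>)"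
    "\<bar>snd q - snd p\<bar> \<le> (\<Sum>i<length ps - 1. \<bar>snd (ps!Suc i) - snd (ps!i)\<bar>)"
    using coord_variation_ge[OF ne] hl by auto
  ultimately show ?thesis using f by auto
qed

lemma sum_abs_eq_abs_sum_same_sign:
  fixes d :: "nat \<Rightarrow> real"
  assumes "(\<Sum>i<n. \<bar>d i\<bar>) = \<bar>\<Sum>i<n. d i\<bar>"
  shows "(\<forall>i<n. 0 \<le> d i) \<or> (\<forall>i<n. d i \<le> 0)"
proof (cases "0 \<le> (\<Sum>i<n. d i)")
  case True
  then have "(\<Sum>i<n. \<bar>d i\<bar> - d i) = 0" using assms by (simp add: sum_subtractf)
  then have "\<forall>i<n. \<bar>d i\<bar> - d i = 0" by (subst (asm) sum_nonneg_eq_0_iff) auto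
  then show ?thesis by (metis abs_ge_zero eq_iff_diff_eq_0)
next
  case False
  then have "(\<Sum>i<n. \<bar>d i\<bar> + d i) = 0" using assms by (simp add: sum.distrib)
  then have "\<forall>i<n. \<bar>d i\<bar> + d i = 0" by (subst (asm) sum_nonneg_eq_0_iff) auto
  then show ?thesis by (metis abs_ge_zero add.commute add.right_neutral add_le_same_cancel1)
qed

lemma shortest_rpath_coord_monotone:
  assumes s: "shortest_rpath p q ps" and f: "f \<in> {fst, snd}"
  shows "(\<forall>i. Suc i < length ps \<longrightarrow> f (ps!i) \<le> f (ps!Suc i)) \<or>
         (\<forall>i. Suc i < length ps \<longrightarrow> f (ps!Suc i) \<le> f (ps!i))"
proof -
  have ne: "ps \<noteq> []" and hl: "hd ps = p" "last ps = q"
    using s unfolding shortest_rpath_def rpath_between_def rpath_def by auto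
  have "(\<Sum>i<length ps - 1. \<bar>f (ps!Suc i) - f (ps!i)\<bar>) = \<bar>\<Sum>i<length ps - 1. f (ps!Suc i) - f (ps!i)\<bar>"
    using shortest_rpath_coord_variation[OF s f] coord_telescope[OF ne, of f] hl by simp
  from sum_abs_eq_abs_sum_same_sign[OF this] show ?thesis by auto
qed

lemma monotone_steps_strict:
  fixes d :: "nat \<Rightarrow> real"
  assumes "i < j" "d i < d (Suc i)" "\<And>k. i \<le> k \<Longrightarrow> k < j \<Longrightarrow> d k \<le> d (Suc k)"
  shows "d i < d j"
  using assms
proof (induction j)
  case (Suc j)
  show ?case
  proof (cases "i = j")
    case False
    then have "d i < d j" using Suc by auto
    also have "d j \<le> d (Suc j)" using Suc.prems False by auto
    finally show ?thesis .
  qed (use Suc in simp)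
qed simp

lemma shortest_rpath_vertices_distinct:
  assumes s: "shortest_rpath p q ps" and ij: "i < j" "j < length ps" and step: "ps!i \<noteq> ps!Suc i"
  shows "ps!i \<noteq> ps!j"
proof -
  obtain f where f: "f \<in> {fst, snd}" "f (ps!i) \<noteq> f (ps!Suc i)"
    using step by (auto simp: prod_eq_iff)
  have si: "Suc i < length ps" using ij by simp
  from shortest_rpath_coord_monotone[OF s f(1)] have "f (ps!i) \<noteq> f (ps!j)"
  proof
    assume mono: "\<forall>k. Suc k < length ps \<longrightarrow> f (ps!k) \<le> f (ps!Suc k)"
    have "f (ps!i) < f (ps!Suc i)" using mono si f(2) by (simp add: order_le_neq_trans)
    with ij(1) have "f (ps!i) < f (ps!j)"
      by (rule monotone_steps_strict[where d="\<lambda>k. f (ps!k)"]) (use mono ij(2) in auto)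
    then show ?thesis by simp
  next
    assume mono: "\<forall>k. Suc k < length ps \<longrightarrow> f (ps!Suc k) \<le> f (ps!k)"
    have "- f (ps!i) < - f (ps!Suc i)" using mono si f(2) by (simp add: order_le_neq_trans)
    with ij(1) have "- f (ps!i) < - f (ps!j)"
      by (rule monotone_steps_strict[where d="\<lambda>k. - f (ps!k)"]) (use mono ij(2) in auto)
    then show ?thesis by simp
  qed
  then show ?thesis by auto
qed

lemma rpath_step_cases:
  "rpath ps \<Longrightarrow> Suc i < length ps \<Longrightarrow> horiz_seg ps i \<or> vert_seg ps i \<or> ps!i = ps!Suc i"
  unfolding rpath_def horiz_seg_def vert_seg_def by (auto simp: prod_eq_iff)

lemma rpath_non_vertical_step:
  "rpath ps \<Longrightarrow> Suc i < length ps \<Longrightarrow> \<not> vert_seg ps i \<Longrightarrow> snd (ps!Suc i) = snd (ps!i)"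
  unfolding rpath_def vert_seg_def by auto

lemma rpath_non_horizontal_step:
  "rpath ps \<Longrightarrow> Suc i < length ps \<Longrightarrow> \<not> horiz_seg ps i \<Longrightarrow> fst (ps!Suc i) = fst (ps!i)"
  unfolding rpath_def horiz_seg_def by auto

lemma corner_point_between:
  assumes rp: "rpath ps"
    and AB: "A = horiz_seg ps \<and> B = vert_seg ps \<or> A = vert_seg ps \<and> B = horiz_seg ps"
    and "A a" "B b" "a < b"
  shows "\<exists>v. a < v \<and> v \<le> b \<and> B v \<and> ps!v \<in> corner_points ps"
proof -
  define h where "h = Max {i. a \<le> i \<and> i < b \<and> A i}"
  have fin: "finite {i. a \<le> i \<and> i < b \<and> A i}" by simp
  have h: "a \<le> h" "h < b" "A h"
    using Max_in[OF fin] \<open>A a\<close> \<open>a < b\<close> unfolding h_def by blast+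
  have h_max: "i \<le> h" if "a \<le> i" "i < b" "A i" for i
    using Max_ge[OF fin] that unfolding h_def by blast
  define v where "v = Min {i. h < i \<and> i \<le> b \<and> B i}"
  have fin': "finite {i. h < i \<and> i \<le> b \<and> B i}" by simp
  have v: "h < v" "v \<le> b" "B v"
    using Min_in[OF fin'] \<open>B b\<close> h(2) unfolding v_def by blast+
  have v_min: "v \<le> i" if "h < i" "i \<le> b" "B i" for i
    using Min_le[OF fin'] that unfolding v_def by blast
  have len: "Suc b < length ps"
    using \<open>B b\<close> AB unfolding horiz_seg_def vert_seg_def by auto
  have degenerate: "ps!n = ps!Suc n" if "h < n" "n < v" for n
  proof -
    have "\<not> A n" using h_max[of n] h(1) that v(2) by fastforce
    moreover have "\<not> B n" using v_min[of n] that v(2) by fastforce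
    ultimately show ?thesis
      using rpath_step_cases[OF rp, of n] AB that v(2) len by auto
  qed
  have "Suc h \<le> v" using v(1) by simp
  then have "ps!Suc h = ps!v"
    by (induction v rule: dec_induct) (auto simp: degenerate)
  then have "ps!v \<in> rseg ps h" "ps!v \<in> rseg ps v"
    unfolding rseg_def by (metis ends_in_segment)+
  then have "ps!v \<in> corner_points ps"
    using AB h(3) v(3) unfolding corner_points_def by blast
  then show ?thesis using h(1) v by (intro exI[of _ v]) auto
qed

lemma shortest_one_corner_no_zigzag:
  assumes s: "shortest_rpath p q ps" and c1: "at_most_one_corner ps"
    and AB: "A = horiz_seg ps \<and> B = vert_seg ps \<or> A = vert_seg ps \<and> B = horiz_seg ps"
    and "A a" "B b" "A c" "a < b" "b < c"
  shows False
proof -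
  have rp: "rpath ps" using s unfolding shortest_rpath_def rpath_between_def by simp
  have BA: "B = horiz_seg ps \<and> A = vert_seg ps \<or> B = vert_seg ps \<and> A = horiz_seg ps"
    using AB by blast
  obtain v where v: "v \<le> b" "B v" "ps!v \<in> corner_points ps"
    using corner_point_between[OF rp AB \<open>A a\<close> \<open>B b\<close> \<open>a < b\<close>] by blast
  obtain h where h: "v < h" "A h" "ps!h \<in> corner_points ps"
    using corner_point_between[OF rp BA \<open>B v\<close> \<open>A c\<close>] v(1) \<open>b < c\<close> by auto
  have "ps!v \<noteq> ps!Suc v" "h < length ps"
    using v(2) h(2) AB unfolding horiz_seg_def vert_seg_def by (auto simp: prod_eq_iff)
  then have "ps!v \<noteq> ps!h" using shortest_rpath_vertices_distinct[OF s h(1)] by blast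
  then show False using c1 v(3) h(3) unfolding at_most_one_corner_def by blast
qed

lemma split_without_zigzag:
  fixes H V :: "nat \<Rightarrow> bool"
  assumes excl: "\<And>i. \<not> (H i \<and> V i)"
    and no_HVH: "\<And>a b c. a < b \<Longrightarrow> b < c \<Longrightarrow> c < m \<Longrightarrow> H a \<Longrightarrow> V b \<Longrightarrow> H c \<Longrightarrow> False"
    and no_VHV: "\<And>a b c. a < b \<Longrightarrow> b < c \<Longrightarrow> c < m \<Longrightarrow> V a \<Longrightarrow> H b \<Longrightarrow> V c \<Longrightarrow> False"
  shows "\<exists>k\<le>m. (\<forall>i<k. \<not> V i) \<and> (\<forall>i. k \<le> i \<longrightarrow> i < m \<longrightarrow> \<not> H i) \<or>
               (\<forall>i<k. \<not> H i) \<and> (\<forall>i. k \<le> i \<longrightarrow> i < m \<longrightarrow> \<not> V i)"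
proof (cases "\<exists>i. i < m \<and> V i")
  case False
  then show ?thesis by (intro exI[of _ m]) auto
next
  case True
  define k where "k = (LEAST i. i < m \<and> V i)"
  have k: "k < m \<and> V k" unfolding k_def by (rule LeastI_ex[OF True])
  have k_min: "\<not> V i" if "i < k" for i
    using not_less_Least[of i "\<lambda>i. i < m \<and> V i"] that k unfolding k_def by auto
  show ?thesis
  proof (cases "\<exists>j. k \<le> j \<and> j < m \<and> H j")
    case False
    then show ?thesis using k k_min by (intro exI[of _ k]) auto
  next
    case True
    then obtain j where j: "k \<le> j" "j < m" "H j" by blast
    then have ex: "\<exists>i. i < m \<and> H i" by blast
    define l where "l = (LEAST i. i < m \<and> H i)"
    have l: "l < m \<and> H l" unfolding l_def by (rule LeastI_ex[OF ex])
    have l_min: "\<not> H i" if "i < l" for i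
      using not_less_Least[of i "\<lambda>i. i < m \<and> H i"] that l unfolding l_def by auto
    have "k \<noteq> l" "k \<noteq> j" using k l j(3) excl by auto
    have "k < l"
    proof (rule ccontr)
      assume "\<not> k < l"
      then have "l < k" using \<open>k \<noteq> l\<close> by simp
      then show False using no_HVH[of l k j] j \<open>k \<noteq> j\<close> k l by simp
    qed
    have "\<not> V i" if "l \<le> i" "i < m" for i
    proof
      assume "V i"
      then have "l < i" using that l excl le_neq_implies_less by blast
      then show False using no_VHV[of k l i] \<open>k < l\<close> k l \<open>V i\<close> that by simp
    qed
    then show ?thesis using l l_min by (intro exI[of _ l]) auto
  qed
qed

lemma axis_parallel_run:
  assumes f: "f \<in> {fst, snd}" and ij: "i \<le> j" "j < length ps"
    and const: "\<And>k. i \<le> k \<Longrightarrow> k < j \<Longrightarrow> f (ps!Suc k) = f (ps!k)"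
  shows "f (ps!j) = f (ps!i)" "closed_segment (ps!i) (ps!j) \<subseteq> rpath_set ps"
proof -
  have "f (ps!j) = f (ps!i) \<and> closed_segment (ps!i) (ps!j) \<subseteq> rpath_set ps"
    using ij(1)
  proof (induction j rule: dec_induct)
    case base
    have "ps!i \<in> set ps" using ij by simp
    then show ?case unfolding rpath_set_def by simp
  next
    case (step n)
    then have fn: "f (ps!Suc n) = f (ps!n)" using const by simp
    have "closed_segment (ps!n) (ps!Suc n) \<subseteq> rpath_set ps"
      using step.hyps ij(2) unfolding rpath_set_def rseg_def by auto
    moreover have "closed_segment (ps!i) (ps!Suc n)
        \<subseteq> closed_segment (ps!i) (ps!n) \<union> closed_segment (ps!n) (ps!Suc n)"
      using axis_segment_split[OF f] step.IH fn by simp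
    ultimately show ?case using step.IH fn by auto
  qed
  then show "f (ps!j) = f (ps!i)" "closed_segment (ps!i) (ps!j) \<subseteq> rpath_set ps" by auto
qed

lemma shortest_rpath_axis_parallel:
  assumes s: "shortest_rpath p q ps" and f: "f \<in> {fst, snd}" "f p = f q"
  shows "closed_segment p q \<subseteq> rpath_set ps"
proof -
  have ne: "ps \<noteq> []" and p0: "ps!0 = p" and qm: "ps!(length ps - 1) = q"
    using s unfolding shortest_rpath_def rpath_between_def rpath_def
    by (auto simp: hd_conv_nth last_conv_nth)
  have "(\<Sum>i<length ps - 1. \<bar>f (ps!Suc i) - f (ps!i)\<bar>) = 0"
    using shortest_rpath_coord_variation[OF s f(1)] f(2) by simp
  then have "f (ps!Suc k) = f (ps!k)" if "k < length ps - 1" for k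
    using that by (subst (asm) sum_nonneg_eq_0_iff) auto
  then show ?thesis using axis_parallel_run(2)[OF f(1), of 0 "length ps - 1" ps] p0 qm ne by simp
qed

lemma rect_convex_axis_segment:
  assumes "rect_convex W" "u \<in> W" "v \<in> W" "f \<in> {fst, snd}" "f u = f v"
  shows "closed_segment u v \<subseteq> W"
  using assms shortest_rpath_axis_parallel unfolding rect_convex_def by blast

lemma shortest_one_corner_contains_elbow:
  assumes s: "shortest_rpath p q ps" and c1: "at_most_one_corner ps"
  shows "\<exists>c\<in>elbow_corners p q. elbow p c q \<subseteq> rpath_set ps"
proof -
  have rp: "rpath ps" and ne: "ps \<noteq> []"
    using s unfolding shortest_rpath_def rpath_between_def rpath_def by auto
  define m where "m = length ps - 1"
  have p0: "ps!0 = p" and qm: "ps!m = q" and m: "m < length ps"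
    using s ne unfolding shortest_rpath_def rpath_between_def m_def
    by (auto simp: hd_conv_nth last_conv_nth)
  have "\<not> (horiz_seg ps i \<and> vert_seg ps i)" for i
    unfolding horiz_seg_def vert_seg_def by auto
  then obtain k where k: "k \<le> m" and split:
    "(\<forall>i<k. \<not> vert_seg ps i) \<and> (\<forall>i. k \<le> i \<longrightarrow> i < m \<longrightarrow> \<not> horiz_seg ps i) \<or>
     (\<forall>i<k. \<not> horiz_seg ps i) \<and> (\<forall>i. k \<le> i \<longrightarrow> i < m \<longrightarrow> \<not> vert_seg ps i)"
    using split_without_zigzag[of "horiz_seg ps" "vert_seg ps" m]
      shortest_one_corner_no_zigzag[OF s c1] by blast
  from split show ?thesis
  proof
    assume a: "(\<forall>i<k. \<not> vert_seg ps i) \<and> (\<forall>i. k \<le> i \<longrightarrow> i < m \<longrightarrow> \<not> horiz_seg ps i)"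
    have run1: "snd (ps!k) = snd (ps!0)" "closed_segment (ps!0) (ps!k) \<subseteq> rpath_set ps"
      using axis_parallel_run[of snd 0 k ps] a k m rpath_non_vertical_step[OF rp] by auto
    have run2: "fst (ps!m) = fst (ps!k)" "closed_segment (ps!k) (ps!m) \<subseteq> rpath_set ps"
      using axis_parallel_run[of fst k m ps] a k m rpath_non_horizontal_step[OF rp] by auto
    have "ps!k = (fst q, snd p)" using run1(1) run2(1) p0 qm by (simp add: prod_eq_iff)
    then show ?thesis using run1(2) run2(2) p0 qm
      unfolding elbow_def elbow_corners_def by (intro bexI[of _ "ps!k"]) auto
  next
    assume a: "(\<forall>i<k. \<not> horiz_seg ps i) \<and> (\<forall>i. k \<le> i \<longrightarrow> i < m \<longrightarrow> \<not> vert_seg ps i)"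
    have run1: "fst (ps!k) = fst (ps!0)" "closed_segment (ps!0) (ps!k) \<subseteq> rpath_set ps"
      using axis_parallel_run[of fst 0 k ps] a k m rpath_non_horizontal_step[OF rp] by auto
    have run2: "snd (ps!m) = snd (ps!k)" "closed_segment (ps!k) (ps!m) \<subseteq> rpath_set ps"
      using axis_parallel_run[of snd k m ps] a k m rpath_non_vertical_step[OF rp] by auto
    have "ps!k = (fst p, snd q)" using run1(1) run2(1) p0 qm by (simp add: prod_eq_iff)
    then show ?thesis using run1(2) run2(2) p0 qm
      unfolding elbow_def elbow_corners_def by (intro bexI[of _ "ps!k"]) auto
  qed
qed

section \<open>Skeletons and axis reflections\<close>

definition blocked :: "pt set \<Rightarrow> pt \<Rightarrow> pt \<Rightarrow> bool" where
  "blocked W p q \<longleftrightarrow> p \<notin> interior W \<and> q \<notin> interior W \<and>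
     (\<forall>ps. shortest_rpath p q ps \<and> at_most_one_corner ps \<longrightarrow> rpath_set ps \<inter> interior W \<noteq> {})"

lemma skeleton_iff_blocked:
  "skeleton W S \<longleftrightarrow> (\<forall>s\<in>S. is_segment s) \<and> \<Union>S \<subseteq> W \<and>
     (\<forall>p q ps. blocked W p q \<and> shortest_rpath p q ps \<and> at_most_one_corner ps \<longrightarrow>
        (\<exists>s\<in>S. rpath_set ps \<inter> s \<noteq> {}))"
  unfolding skeleton_def blocked_def by blast

lemma blocked_elbows:
  assumes "blocked W p q" "c \<in> elbow_corners p q"
  shows "elbow p c q \<inter> interior W \<noteq> {}"
  using assms elbow_path unfolding blocked_def by metis

lemma skeleton_meets_axis_segment:
  assumes sk: "skeleton W S" and f: "f \<in> {fst, snd}" "f p = f q"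
    and pq: "p \<notin> interior W" "q \<notin> interior W"
    and z: "z \<in> closed_segment p q" "z \<in> interior W"
  shows "\<exists>s\<in>S. s \<inter> closed_segment p q \<noteq> {}"
proof -
  have "blocked W p q"
    unfolding blocked_def using pq z shortest_rpath_axis_parallel[OF _ f] by blast
  moreover have "q \<in> elbow_corners p q" using f unfolding elbow_corners_def by auto
  ultimately obtain s where "s \<in> S" "rpath_set [p, q, q] \<inter> s \<noteq> {}"
    using sk elbow_path(1,2) unfolding skeleton_iff_blocked by blast
  moreover have "rpath_set [p, q, q] = closed_segment p q"
    using elbow_path(3)[OF \<open>q \<in> elbow_corners p q\<close>] ends_in_segment(2)[of p q]
    unfolding elbow_def by (simp add: insert_absorb)
  ultimately show ?thesis by blast
qed

definition axis_flip :: "real \<Rightarrow> real \<Rightarrow> pt \<Rightarrow> pt" where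
  "axis_flip sx sy z = (sx * fst z, sy * snd z)"

locale axis_reflection =
  fixes sx sy :: real
  assumes abs_sx: "\<bar>sx\<bar> = 1" and abs_sy: "\<bar>sy\<bar> = 1"
begin

abbreviation flip :: "pt \<Rightarrow> pt" where "flip \<equiv> axis_flip sx sy"

lemma signs_nonzero [simp]: "sx \<noteq> 0" "sy \<noteq> 0"
  using abs_sx abs_sy by auto

lemma fst_flip [simp]: "fst (flip z) = sx * fst z" and snd_flip [simp]: "snd (flip z) = sy * snd z"
  unfolding axis_flip_def by simp_all

lemma flip_Pair [simp]: "flip (a, b) = (sx * a, sy * b)"
  unfolding axis_flip_def by simp

lemma signs_mult_cancel [simp]: "sx * (sx * t) = t" "sy * (sy * t) = t"
proof -
  have "sx * sx = 1" "sy * sy = 1"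
    using abs_mult_self_eq[of sx] abs_mult_self_eq[of sy] abs_sx abs_sy by simp_all
  then show "sx * (sx * t) = t" "sy * (sy * t) = t" by (simp_all add: mult.assoc[symmetric])
qed

lemma flip_flip [simp]: "flip (flip z) = z"
  unfolding axis_flip_def by simp

lemma flip_eq_iff [simp]: "flip a = flip b \<longleftrightarrow> a = b"
  using flip_flip by metis

lemma inj_flip: "inj flip"
  by (simp add: inj_def)

lemma flip_image_flip_image [simp]: "flip ` flip ` A = A"
  by (force simp: image_iff)

lemma flip_mem_flip_image [simp]: "flip z \<in> flip ` A \<longleftrightarrow> z \<in> A"
  by (auto simp: image_iff)

lemma mem_flip_image_iff: "x \<in> flip ` A \<longleftrightarrow> flip x \<in> A"
  using flip_mem_flip_image[of "flip x" A] by simp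

lemma Int_flip_image_empty_iff: "A \<inter> flip ` B = {} \<longleftrightarrow> flip ` A \<inter> B = {}"
proof -
  have "A \<inter> flip ` B = flip ` (flip ` A \<inter> B)" by (simp add: image_Int[OF inj_flip])
  then show ?thesis by simp
qed

lemma linear_flip: "linear flip"
  by (rule linearI) (auto simp: axis_flip_def algebra_simps)

lemma flip_closed_segment: "flip ` closed_segment a b = closed_segment (flip a) (flip b)"
  by (rule closed_segment_linear_image[OF linear_flip, symmetric])

lemma interior_flip_image: "interior (flip ` A) = flip ` interior A"
  by (rule interior_injective_linear_image[OF linear_flip inj_flip])

lemma l1dist_flip [simp]: "l1dist (flip a) (flip b) = l1dist a b"
  unfolding l1dist_def
  by (simp add: right_diff_distrib[symmetric] abs_mult abs_sx abs_sy)

lemma rpath_map_flip [simp]: "rpath (map flip ps) \<longleftrightarrow> rpath ps"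
  unfolding rpath_def by auto

lemma rlength_map_flip [simp]: "rlength (map flip ps) = rlength ps"
  unfolding rlength_def by (intro sum.cong) auto

lemma shortest_rpath_map_flip_imp:
  assumes "shortest_rpath p q ps"
  shows "shortest_rpath (flip p) (flip q) (map flip ps)"
  unfolding shortest_rpath_def rpath_between_def
proof (intro conjI allI impI)
  show "rpath (map flip ps)" "hd (map flip ps) = flip p" "last (map flip ps) = flip q"
    using assms unfolding shortest_rpath_def rpath_between_def rpath_def
    by (auto simp: hd_map last_map)
  fix ps' assume "rpath ps' \<and> hd ps' = flip p \<and> last ps' = flip q"
  then have "rpath_between p q (map flip ps')"
    unfolding rpath_between_def rpath_def by (auto simp: hd_map last_map)
  then show "rlength (map flip ps) \<le> rlength ps'"
    using assms unfolding shortest_rpath_def by (metis rlength_map_flip)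
qed

lemma shortest_rpath_map_flip [simp]:
  "shortest_rpath (flip p) (flip q) (map flip ps) \<longleftrightarrow> shortest_rpath p q ps"
proof
  assume "shortest_rpath (flip p) (flip q) (map flip ps)"
  from shortest_rpath_map_flip_imp[OF this] show "shortest_rpath p q ps" by (simp add: comp_def)
qed (rule shortest_rpath_map_flip_imp)

lemma horiz_seg_map_flip [simp]: "horiz_seg (map flip ps) i \<longleftrightarrow> horiz_seg ps i"
  and vert_seg_map_flip [simp]: "vert_seg (map flip ps) i \<longleftrightarrow> vert_seg ps i"
  unfolding horiz_seg_def vert_seg_def by auto

lemma rseg_map_flip: "Suc i < length ps \<Longrightarrow> rseg (map flip ps) i = flip ` rseg ps i"
  unfolding rseg_def by (simp add: flip_closed_segment)

lemma corner_points_map_flip: "corner_points (map flip ps) = flip ` corner_points ps"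
proof -
  have seg: "x \<in> rseg (map flip ps) i \<longleftrightarrow> flip x \<in> rseg ps i" if "Suc i < length ps" for x i
    using that by (simp add: rseg_map_flip mem_flip_image_iff)
  have len: "horiz_seg ps i \<Longrightarrow> Suc i < length ps" "vert_seg ps i \<Longrightarrow> Suc i < length ps" for i
    unfolding horiz_seg_def vert_seg_def by auto
  have "x \<in> corner_points (map flip ps) \<longleftrightarrow> flip x \<in> corner_points ps" for x
    unfolding corner_points_def mem_Collect_eq horiz_seg_map_flip vert_seg_map_flip
    using seg len by blast
  then show ?thesis by (simp add: set_eq_iff mem_flip_image_iff)
qed

lemma at_most_one_corner_map_flip [simp]:
  "at_most_one_corner (map flip ps) \<longleftrightarrow> at_most_one_corner ps"
  unfolding at_most_one_corner_def corner_points_map_flip by auto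

lemma rpath_set_map_flip: "rpath_set (map flip ps) = flip ` rpath_set ps"
  unfolding rpath_set_def image_Un image_UN by (simp add: rseg_map_flip cong: SUP_cong_simp)

lemma blocked_flip_image:
  assumes "blocked W p q"
  shows "blocked (flip ` W) (flip p) (flip q)"
  unfolding blocked_def interior_flip_image
proof (intro conjI allI impI)
  show "flip p \<notin> flip ` interior W" "flip q \<notin> flip ` interior W"
    using assms unfolding blocked_def by auto
  fix ps assume "shortest_rpath (flip p) (flip q) ps \<and> at_most_one_corner ps"
  then have "shortest_rpath p q (map flip ps) \<and> at_most_one_corner (map flip ps)"
    using shortest_rpath_map_flip[of "flip p" "flip q" ps] by simp
  then have "rpath_set (map flip ps) \<inter> interior W \<noteq> {}"
    using assms unfolding blocked_def by blast
  then show "rpath_set ps \<inter> flip ` interior W \<noteq> {}"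
    unfolding rpath_set_map_flip Int_flip_image_empty_iff .
qed

lemma is_segment_flip_image:
  assumes "is_segment s"
  shows "is_segment (flip ` s)"
proof -
  obtain a b where "a \<noteq> b" "s = closed_segment a b" using assms unfolding is_segment_def by blast
  then have "flip a \<noteq> flip b" "flip ` s = closed_segment (flip a) (flip b)"
    by (simp_all add: flip_closed_segment)
  then show ?thesis unfolding is_segment_def by blast
qed

lemma skeleton_flip_image:
  assumes sk: "skeleton W S"
  shows "skeleton (flip ` W) ((`) flip ` S)"
  unfolding skeleton_iff_blocked
proof (intro conjI allI impI)
  show "\<forall>s'\<in>(`) flip ` S. is_segment s'"
    using sk is_segment_flip_image unfolding skeleton_def by blast
  show "\<Union> ((`) flip ` S) \<subseteq> flip ` W"
    using sk unfolding skeleton_def by blast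
next
  fix p q ps assume a: "blocked (flip ` W) p q \<and> shortest_rpath p q ps \<and> at_most_one_corner ps"
  have "blocked W (flip p) (flip q)"
    using blocked_flip_image[of "flip ` W" p q] a by simp
  moreover have "shortest_rpath (flip p) (flip q) (map flip ps)" "at_most_one_corner (map flip ps)"
    using a by simp_all
  ultimately obtain s where "s \<in> S" "rpath_set (map flip ps) \<inter> s \<noteq> {}"
    using sk unfolding skeleton_iff_blocked by blast
  then have "rpath_set ps \<inter> flip ` s \<noteq> {}"
    by (simp add: rpath_set_map_flip Int_flip_image_empty_iff)
  then show "\<exists>s'\<in>(`) flip ` S. rpath_set ps \<inter> s' \<noteq> {}" using \<open>s \<in> S\<close> by blast
qed

end

section \<open>Staircases\<close>

lemma elbow_Pair:
  "elbow (a, b) (a, b') (a', b') = {a} \<times> closed_segment b b' \<union> closed_segment a a' \<times> {b'}"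
  "elbow (a, b) (a', b) (a', b') = closed_segment a a' \<times> {b} \<union> {a'} \<times> closed_segment b b'"
  by (simp_all add: elbow_def closed_segment_same_fst closed_segment_same_snd)

locale staircase =
  fixes x0 x1 y0 y1 :: real and W :: "pt set"
  assumes x_less: "x0 < x1" and y_less: "y0 < y1"
    and W_subset: "W \<subseteq> cbox (x0, y0) (x1, y1)"
    and down_closed:
      "\<And>u z. u \<in> W \<Longrightarrow> x0 \<le> fst z \<Longrightarrow> fst z \<le> fst u \<Longrightarrow> y0 \<le> snd z \<Longrightarrow> snd z \<le> snd u \<Longrightarrow> z \<in> W"
begin

abbreviation left_side :: "pt set" where "left_side \<equiv> closed_segment (x0, y0) (x0, y1)"
abbreviation bottom_side :: "pt set" where "bottom_side \<equiv> closed_segment (x0, y0) (x1, y0)"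
abbreviation antidiagonal :: "pt set" where "antidiagonal \<equiv> closed_segment (x1, y0) (x0, y1)"

lemma interior_in_open_box:
  "z \<in> interior W \<Longrightarrow> x0 < fst z \<and> fst z < x1 \<and> y0 < snd z \<and> snd z < y1"
  using interior_mono[OF W_subset] by (auto simp: mem_box_pair)

lemma interiorI:
  assumes "u \<in> W" "x0 < fst z" "fst z < fst u" "y0 < snd z" "snd z < snd u"
  shows "z \<in> interior W"
proof -
  have "box (x0, y0) u \<subseteq> W"
    using down_closed[OF assms(1)]
    by (force simp: subset_iff mem_box_pair[of _ x0 y0 "fst u" "snd u", simplified])
  moreover have "z \<in> box (x0, y0) u"
    using assms mem_box_pair[of z x0 y0 "fst u" "snd u"] by simp
  ultimately show ?thesis using interior_maximal open_box by blast
qed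

lemma interior_dominated:
  assumes "z \<in> interior W"
  obtains u where "u \<in> W" "fst z < fst u" "snd z < snd u"
proof -
  obtain e where e: "e > 0" "ball z e \<subseteq> W" using assms unfolding mem_interior by blast
  define u where "u = (fst z + e/4, snd z + e/4)"
  have "dist z u = sqrt ((e/4)\<^sup>2 + (e/4)\<^sup>2)"
    unfolding u_def using e(1) by (cases z) (simp add: dist_Pair_Pair dist_real_def)
  also have "\<dots> \<le> e/2" using sqrt_sum_squares_le_sum_abs[of "e/4" "e/4"] e(1) by simp
  finally have "u \<in> W" using e by auto
  then show ?thesis using that e(1) unfolding u_def by simp
qed

lemma interior_down_closed:
  assumes "z \<in> interior W" "x0 < fst w" "fst w \<le> fst z" "y0 < snd w" "snd w \<le> snd z"
  shows "w \<in> interior W"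
proof -
  obtain u where "u \<in> W" "fst z < fst u" "snd z < snd u"
    using interior_dominated[OF assms(1)] by blast
  then show ?thesis using interiorI assms(2-5) by simp
qed

definition diag_level :: "pt \<Rightarrow> real" where
  "diag_level z = (fst z - x0) * (y1 - y0) + (snd z - y0) * (x1 - x0) - (x1 - x0) * (y1 - y0)"

lemma diag_level_affine:
  "diag_level ((1 - t) *\<^sub>R a + t *\<^sub>R b) = (1 - t) * diag_level a + t * diag_level b"
  unfolding diag_level_def by (simp add: algebra_simps)

lemma diag_level_zero_on_antidiagonal:
  assumes "x0 \<le> fst w" "y0 \<le> snd w" "diag_level w = 0"
  shows "w \<in> antidiagonal"
proof -
  have d: "y1 - y0 > 0" "x1 - x0 > 0" using x_less y_less by auto
  define u where "u = (snd w - y0) / (y1 - y0)"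
  have "u * (y1 - y0) = snd w - y0" unfolding u_def using d by simp
  then have sw: "snd w = (1 - u) * y0 + u * y1" by (simp add: algebra_simps)
  have "(fst w - x0) * (y1 - y0) = ((1 - u) * x1 + u * x0 - x0) * (y1 - y0)"
    using assms(3) sw unfolding diag_level_def by algebra
  then have "fst w = (1 - u) * x1 + u * x0" using d by simp
  moreover note sw
  moreover have "0 \<le> u" unfolding u_def using assms(2) d by simp
  moreover have "(snd w - y0) * (x1 - x0) \<le> (x1 - x0) * (y1 - y0)"
    using assms(1,3) d unfolding diag_level_def by (smt (verit) mult_nonneg_nonneg)
  then have "u \<le> 1" unfolding u_def using d by (simp add: mult.commute)
  ultimately show ?thesis
    unfolding closed_segment_def by (auto intro!: exI[of _ u] simp: prod_eq_iff)
qed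

lemma segment_meets_antidiagonal:
  assumes "x0 \<le> fst a" "y0 \<le> snd a" "x0 \<le> fst b" "y0 \<le> snd b" "diag_level a \<le> 0" "0 \<le> diag_level b"
  shows "closed_segment a b \<inter> antidiagonal \<noteq> {}"
proof -
  obtain t where t: "0 \<le> t" "t \<le> 1" "(1 - t) * diag_level a + t * diag_level b = 0"
  proof (cases "diag_level a = diag_level b")
    case True
    then show ?thesis using that[of 0] assms(5,6) by simp
  next
    case False
    then show ?thesis using that[of "diag_level a / (diag_level a - diag_level b)"] assms(5,6)
      by (simp add: divide_simps)
  qed
  define w where "w = (1 - t) *\<^sub>R a + t *\<^sub>R b"
  have w: "w \<in> closed_segment a b" unfolding w_def closed_segment_def using t by auto
  then have "x0 \<le> fst w" "y0 \<le> snd w" using closed_segment_coord_bounds[OF w] assms(1-4) by auto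
  moreover have "diag_level w = 0" unfolding w_def diag_level_affine using t(3) .
  ultimately show ?thesis using w diag_level_zero_on_antidiagonal by blast
qed

lemma interior_below_antidiagonal:
  assumes d: "antidiagonal \<subseteq> W" and z: "x0 < fst z" "y0 < snd z" "diag_level z < 0"
  shows "z \<in> interior W"
proof -
  define k where "k = (y1 - y0) + (x1 - x0)"
  have k: "k > 0" unfolding k_def using x_less y_less by simp
  define e where "e = - diag_level z / k"
  have e: "e > 0" unfolding e_def using k z(3) by (simp add: divide_neg_pos)
  define u where "u = (fst z + e, snd z + e)"
  have "diag_level u = diag_level z + e * k"
    unfolding u_def diag_level_def k_def by (simp add: algebra_simps)
  also have "\<dots> = 0" unfolding e_def using k by simp
  finally have "u \<in> W" using diag_level_zero_on_antidiagonal[of u] d z e unfolding u_def by auto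
  then show ?thesis using interiorI[of u z] z e unfolding u_def by auto
qed

definition side_path :: "pt set \<Rightarrow> bool" where
  "side_path S \<longleftrightarrow> (\<exists>u m v. closed_segment u m \<subseteq> S \<and> closed_segment m v \<subseteq> S \<and>
     u \<in> left_side \<union> bottom_side \<and> x0 \<le> fst m \<and> y0 \<le> snd m \<and>
     x0 < fst v \<and> y0 < snd v \<and> v \<notin> interior W)"

lemma side_pathI:
  assumes "closed_segment u m \<subseteq> S" "closed_segment m v \<subseteq> S" "u \<in> left_side \<union> bottom_side"
    "x0 \<le> fst m" "y0 \<le> snd m" "x0 < fst v" "y0 < snd v" "v \<notin> interior W"
  shows "side_path S"
  using assms unfolding side_path_def by blast

lemma sides_diag_level_nonpos:
  assumes "u \<in> left_side \<union> bottom_side"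
  shows "x0 \<le> fst u" "y0 \<le> snd u" "diag_level u \<le> 0"
proof -
  have side: "fst u = x0 \<and> snd u \<le> y1 \<and> y0 \<le> snd u \<or> snd u = y0 \<and> fst u \<le> x1 \<and> x0 \<le> fst u"
    using assms x_less y_less by (auto simp: mem_vertical_segment mem_horizontal_segment)
  then show "x0 \<le> fst u" "y0 \<le> snd u" using x_less y_less by auto
  have "diag_level u = (x1 - x0) * (snd u - y1) \<or> diag_level u = (y1 - y0) * (fst u - x1)"
    using side unfolding diag_level_def by (auto simp: algebra_simps)
  then show "diag_level u \<le> 0"
    using side x_less y_less by (auto simp: mult_nonneg_nonpos)
qed

lemma side_path_meets_sides: "side_path S \<Longrightarrow> S \<inter> (left_side \<union> bottom_side) \<noteq> {}"
  unfolding side_path_def by blast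

lemma side_path_meets_antidiagonal:
  assumes d: "antidiagonal \<subseteq> W" and "side_path S"
  shows "S \<inter> antidiagonal \<noteq> {}"
proof -
  obtain u m v where um: "closed_segment u m \<subseteq> S" and mv: "closed_segment m v \<subseteq> S"
    and u: "u \<in> left_side \<union> bottom_side" and m: "x0 \<le> fst m" "y0 \<le> snd m"
    and v: "x0 < fst v" "y0 < snd v" "v \<notin> interior W"
    using assms(2) unfolding side_path_def by blast
  have "0 \<le> diag_level v" using interior_below_antidiagonal[OF d] v by force
  show ?thesis
  proof (cases "0 \<le> diag_level m")
    case True
    then show ?thesis
      using segment_meets_antidiagonal[of u m] sides_diag_level_nonpos[OF u] m um by blast
  next
    case False
    then show ?thesis
      using segment_meets_antidiagonal[of m v] m v \<open>0 \<le> diag_level v\<close> mv by fastforce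
  qed
qed

lemmas segment_Pair_simps =
  closed_segment_same_fst closed_segment_same_snd closed_segment_eq_real_ivl

lemma side_paths_ascending_left:
  assumes le: "a \<le> a'" "b \<le> b'" and a: "a \<le> x0" and q: "(a', b') \<notin> interior W"
    and z1: "z1 \<in> elbow (a, b) (a, b') (a', b')" "z1 \<in> interior W"
    and z2: "z2 \<in> elbow (a, b) (a', b) (a', b')" "z2 \<in> interior W"
  shows "side_path (elbow (a, b) (a, b') (a', b')) \<and> side_path (elbow (a, b) (a', b) (a', b'))"
proof -
  note box1 = interior_in_open_box[OF z1(2)] and box2 = interior_in_open_box[OF z2(2)]
  have E1: "elbow (a, b) (a, b') (a', b') = {a} \<times> {b..b'} \<union> {a..a'} \<times> {b'}"
    and E2: "elbow (a, b) (a', b) (a', b') = {a..a'} \<times> {b} \<union> {a'} \<times> {b..b'}"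
    using le by (simp_all add: elbow_Pair closed_segment_eq_real_ivl)
  have z1': "fst z1 \<le> a'" "snd z1 = b'" using z1(1) box1 a unfolding E1 by auto
  have "side_path (elbow (a, b) (a, b') (a', b'))"
    by (rule side_pathI[of "(x0, b')" "(x0, b')" _ "(a', b')"])
      (use a z1' box1 q y_less in \<open>auto simp: E1 segment_Pair_simps\<close>)
  moreover have "side_path (elbow (a, b) (a', b) (a', b'))"
  proof (cases "y0 < b")
    case True
    show ?thesis
      by (rule side_pathI[of "(x0, b)" "(a', b)" _ "(a', b')"])
        (use a True le z1' box1 q in \<open>auto simp: E2 segment_Pair_simps\<close>)
  next
    case False
    have z2': "fst z2 = a'" "b \<le> snd z2" using z2(1) box2 False unfolding E2 by auto
    show ?thesis
      by (rule side_pathI[of "(a', y0)" "(a', y0)" _ "(a', b')"])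
        (use False le z2' box2 z1' box1 q x_less in \<open>auto simp: E2 segment_Pair_simps\<close>)
  qed
  ultimately show ?thesis ..
qed

lemma side_paths_ascending_below:
  assumes le: "a \<le> a'" "b \<le> b'" and b: "x0 < a" "b \<le> y0" and q: "(a', b') \<notin> interior W"
    and z1: "z1 \<in> elbow (a, b) (a, b') (a', b')" "z1 \<in> interior W"
    and z2: "z2 \<in> elbow (a, b) (a', b) (a', b')" "z2 \<in> interior W"
  shows "side_path (elbow (a, b) (a, b') (a', b')) \<and> side_path (elbow (a, b) (a', b) (a', b'))"
proof -
  note box1 = interior_in_open_box[OF z1(2)] and box2 = interior_in_open_box[OF z2(2)]
  have E1: "elbow (a, b) (a, b') (a', b') = {a} \<times> {b..b'} \<union> {a..a'} \<times> {b'}"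
    and E2: "elbow (a, b) (a', b) (a', b') = {a..a'} \<times> {b} \<union> {a'} \<times> {b..b'}"
    using le by (simp_all add: elbow_Pair closed_segment_eq_real_ivl)
  have "a < x1" "y0 < b'" using z1(1) box1 unfolding E1 by auto
  then have "side_path (elbow (a, b) (a, b') (a', b'))"
    by (intro side_pathI[of "(a, y0)" "(a, b')" _ "(a', b')"])
      (use b le q in \<open>auto simp: E1 segment_Pair_simps\<close>)
  moreover have z2': "fst z2 = a'" "snd z2 \<le> b'" using z2(1) box2 b unfolding E2 by auto
  then have "side_path (elbow (a, b) (a', b) (a', b'))"
    by (intro side_pathI[of "(a', y0)" "(a', y0)" _ "(a', b')"])
      (use b box2 q x_less in \<open>auto simp: E2 segment_Pair_simps\<close>)
  ultimately show ?thesis ..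
qed

lemma side_paths_ascending:
  assumes le: "a \<le> a'" "b \<le> b'"
    and p: "(a, b) \<notin> interior W" and q: "(a', b') \<notin> interior W"
    and z1: "z1 \<in> elbow (a, b) (a, b') (a', b')" "z1 \<in> interior W"
    and z2: "z2 \<in> elbow (a, b) (a', b) (a', b')" "z2 \<in> interior W"
  shows "side_path (elbow (a, b) (a, b') (a', b')) \<and> side_path (elbow (a, b) (a', b) (a', b'))"
proof -
  have "a \<le> fst z1" "b \<le> snd z1"
    using z1(1) le by (auto simp: elbow_Pair closed_segment_eq_real_ivl)
  then have "\<not> (x0 < a \<and> y0 < b)"
    using interior_down_closed[OF z1(2), of "(a, b)"] p by auto
  then show ?thesis
  proof (cases "a \<le> x0")
    case True
    then show ?thesis by (rule side_paths_ascending_left[OF le _ q z1 z2])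
  next
    case False
    then show ?thesis
      using \<open>\<not> (x0 < a \<and> y0 < b)\<close> side_paths_ascending_below[OF le _ _ q z1 z2] by simp
  qed
qed

lemma side_paths_descending_left:
  assumes le: "a \<le> a'" "b' \<le> b" and a: "a \<le> x0" "b \<le> y1" and q: "(a', b') \<notin> interior W"
    and z1: "z1 \<in> elbow (a, b) (a, b') (a', b')" "z1 \<in> interior W"
  shows "side_path (elbow (a, b) (a, b') (a', b')) \<and> side_path (elbow (a, b) (a', b) (a', b'))"
proof -
  note box1 = interior_in_open_box[OF z1(2)]
  have E1: "elbow (a, b) (a, b') (a', b') = {a} \<times> {b'..b} \<union> {a..a'} \<times> {b'}"
    and E2: "elbow (a, b) (a', b) (a', b') = {a..a'} \<times> {b} \<union> {a'} \<times> {b'..b}"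
    using le by (simp_all add: elbow_Pair closed_segment_eq_real_ivl)
  have z1': "fst z1 \<le> a'" "snd z1 = b'" using z1(1) box1 a unfolding E1 by auto
  have "side_path (elbow (a, b) (a, b') (a', b'))"
    by (rule side_pathI[of "(x0, b')" "(x0, b')" _ "(a', b')"])
      (use a z1' box1 q y_less in \<open>auto simp: E1 segment_Pair_simps\<close>)
  moreover have "side_path (elbow (a, b) (a', b) (a', b'))"
    by (rule side_pathI[of "(x0, b)" "(a', b)" _ "(a', b')"])
      (use a z1' box1 le q in \<open>auto simp: E2 segment_Pair_simps\<close>)
  ultimately show ?thesis ..
qed

lemma side_paths_descending_below:
  assumes le: "a \<le> a'" "b' \<le> b" and b: "b' \<le> y0" "a' \<le> x1" and p: "(a, b) \<notin> interior W"
    and z1: "z1 \<in> elbow (a, b) (a, b') (a', b')" "z1 \<in> interior W"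
  shows "side_path (elbow (a, b) (a, b') (a', b')) \<and> side_path (elbow (a, b) (a', b) (a', b'))"
proof -
  note box1 = interior_in_open_box[OF z1(2)]
  have E1: "elbow (a, b) (a, b') (a', b') = {a} \<times> {b'..b} \<union> {a..a'} \<times> {b'}"
    and E2: "elbow (a, b) (a', b) (a', b') = {a..a'} \<times> {b} \<union> {a'} \<times> {b'..b}"
    using le by (simp_all add: elbow_Pair closed_segment_eq_real_ivl)
  have z1': "fst z1 = a" "snd z1 \<le> b" using z1(1) box1 b unfolding E1 by auto
  have "side_path (elbow (a, b) (a, b') (a', b'))"
    by (rule side_pathI[of "(a, y0)" "(a, y0)" _ "(a, b)"])
      (use b z1' box1 p x_less in \<open>auto simp: E1 segment_Pair_simps\<close>)
  moreover have "side_path (elbow (a, b) (a', b) (a', b'))"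
    by (rule side_pathI[of "(a', y0)" "(a', b)" _ "(a, b)"])
      (use b z1' box1 le p in \<open>auto simp: E2 segment_Pair_simps\<close>)
  ultimately show ?thesis ..
qed

lemma side_paths_descending:
  assumes le: "a \<le> a'" "b' \<le> b"
    and p: "(a, b) \<notin> interior W" and q: "(a', b') \<notin> interior W"
    and z1: "z1 \<in> elbow (a, b) (a, b') (a', b')" "z1 \<in> interior W"
    and z2: "z2 \<in> elbow (a, b) (a', b) (a', b')" "z2 \<in> interior W"
  shows "side_path (elbow (a, b) (a, b') (a', b')) \<and> side_path (elbow (a, b) (a', b) (a', b'))"
proof -
  note box2 = interior_in_open_box[OF z2(2)]
  have "snd z2 = b \<and> a \<le> fst z2 \<or> fst z2 = a' \<and> b' \<le> snd z2"
    using z2(1) le by (auto simp: elbow_Pair mem_closed_segment_real)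
  then show ?thesis
  proof
    assume top: "snd z2 = b \<and> a \<le> fst z2"
    have "\<not> x0 < a"
    proof
      assume "x0 < a"
      then have "(a, b) \<in> interior W"
        using interior_down_closed[OF z2(2), of "(a, b)"] top box2 by simp
      with p show False ..
    qed
    then show ?thesis using side_paths_descending_left[OF le _ _ q z1] top box2 by simp
  next
    assume right: "fst z2 = a' \<and> b' \<le> snd z2"
    have "\<not> y0 < b'"
    proof
      assume "y0 < b'"
      then have "(a', b') \<in> interior W"
        using interior_down_closed[OF z2(2), of "(a', b')"] right box2 by simp
      with q show False ..
    qed
    then show ?thesis using side_paths_descending_below[OF le _ _ p z1] right box2 by simp
  qed
qed

lemma elbows_side_path:
  assumes "p \<notin> interior W" "q \<notin> interior W"
    and "\<And>c. c \<in> elbow_corners p q \<Longrightarrow> elbow p c q \<inter> interior W \<noteq> {}"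
    and "c \<in> elbow_corners p q"
  shows "side_path (elbow p c q)"
proof -
  have ordered: "side_path (elbow p c q)"
    if ord: "fst p \<le> fst q" and np: "p \<notin> interior W" and nq: "q \<notin> interior W"
      and meets: "\<And>c. c \<in> elbow_corners p q \<Longrightarrow> elbow p c q \<inter> interior W \<noteq> {}"
      and c: "c \<in> elbow_corners p q" for p q c
  proof -
    obtain a b a' b' where pq: "p = (a, b)" "q = (a', b')" by fastforce
    have corners: "elbow_corners p q = {(a, b'), (a', b)}"
      unfolding pq elbow_corners_def by auto
    obtain z1 where z1: "z1 \<in> elbow (a, b) (a, b') (a', b')" "z1 \<in> interior W"
      using meets[of "(a, b')"] unfolding corners by (auto simp: pq)
    obtain z2 where z2: "z2 \<in> elbow (a, b) (a', b) (a', b')" "z2 \<in> interior W"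
      using meets[of "(a', b)"] unfolding corners by (auto simp: pq)
    have "a \<le> a'" using ord pq by simp
    then have
      "side_path (elbow (a, b) (a, b') (a', b')) \<and> side_path (elbow (a, b) (a', b) (a', b'))"
      using side_paths_ascending[of a a' b b' z1 z2] side_paths_descending[of a a' b' b z1 z2]
        np nq z1 z2 unfolding pq by (cases "b \<le> b'") auto
    moreover have "c = (a, b') \<or> c = (a', b)" using c unfolding corners by simp
    ultimately show ?thesis unfolding pq by auto
  qed
  show ?thesis
  proof (cases "fst p \<le> fst q")
    case True
    then show ?thesis using ordered assms by blast
  next
    case False
    then show ?thesis
      using ordered[of q p c] assms by (simp add: elbow_commute elbow_corners_commute)
  qed
qed

lemma blocked_elbow_side_path:
  assumes "blocked W p q" "c \<in> elbow_corners p q"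
  shows "side_path (elbow p c q)"
  using elbows_side_path[OF _ _ blocked_elbows[OF assms(1)] assms(2)] assms(1)
  unfolding blocked_def by blast

lemma blocked_path_meets_sides:
  assumes "blocked W p q" "shortest_rpath p q ps" "at_most_one_corner ps"
  shows "rpath_set ps \<inter> (left_side \<union> bottom_side) \<noteq> {}"
proof -
  obtain c where "c \<in> elbow_corners p q" "elbow p c q \<subseteq> rpath_set ps"
    using shortest_one_corner_contains_elbow[OF assms(2,3)] by blast
  then show ?thesis
    using side_path_meets_sides blocked_elbow_side_path[OF assms(1)] by blast
qed

lemma blocked_path_meets_antidiagonal:
  assumes "antidiagonal \<subseteq> W" "blocked W p q" "shortest_rpath p q ps" "at_most_one_corner ps"
  shows "rpath_set ps \<inter> antidiagonal \<noteq> {}"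
proof -
  obtain c where "c \<in> elbow_corners p q" "elbow p c q \<subseteq> rpath_set ps"
    using shortest_one_corner_contains_elbow[OF assms(3,4)] by blast
  then show ?thesis
    using side_path_meets_antidiagonal[OF assms(1)] blocked_elbow_side_path[OF assms(2)] by blast
qed

lemma skeleton_sides:
  assumes "left_side \<subseteq> W" "bottom_side \<subseteq> W"
  shows "skeleton W {left_side, bottom_side}"
  unfolding skeleton_iff_blocked
proof (intro conjI allI impI)
  have "(x0, y0) \<noteq> (x0, y1)" "(x0, y0) \<noteq> (x1, y0)" using x_less y_less by auto
  then show "\<forall>s\<in>{left_side, bottom_side}. is_segment s" unfolding is_segment_def by blast
  show "\<Union> {left_side, bottom_side} \<subseteq> W" using assms by simp
  fix p q ps assume "blocked W p q \<and> shortest_rpath p q ps \<and> at_most_one_corner ps"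
  then show "\<exists>s\<in>{left_side, bottom_side}. rpath_set ps \<inter> s \<noteq> {}"
    using blocked_path_meets_sides by blast
qed

lemma skeleton_antidiagonal:
  assumes "antidiagonal \<subseteq> W"
  shows "skeleton W {antidiagonal}"
  unfolding skeleton_iff_blocked
proof (intro conjI allI impI)
  have "(x1, y0) \<noteq> (x0, y1)" using x_less by auto
  then show "\<forall>s\<in>{antidiagonal}. is_segment s" unfolding is_segment_def by blast
  show "\<Union> {antidiagonal} \<subseteq> W" using assms by simp
  fix p q ps assume "blocked W p q \<and> shortest_rpath p q ps \<and> at_most_one_corner ps"
  then show "\<exists>s\<in>{antidiagonal}. rpath_set ps \<inter> s \<noteq> {}"
    using blocked_path_meets_antidiagonal[OF assms] by blast
qed

end

locale spanning_staircase = staircase +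
  assumes top_reached: "\<exists>u\<in>W. x0 < fst u \<and> snd u = y1"
    and right_reached: "\<exists>u\<in>W. fst u = x1 \<and> y0 < snd u"
begin

lemma skeleton_meets_horizontal_line:
  assumes sk: "skeleton W S" and y: "y0 < y" "y < y1"
  shows "\<exists>s\<in>S. \<exists>w\<in>s. snd w = y"
proof -
  obtain u where u: "u \<in> W" "x0 < fst u" "snd u = y1" using top_reached by blast
  have "fst u \<le> x1" using u(1) W_subset by (auto simp: mem_cbox_pair)
  define z where "z = ((x0 + fst u) / 2, y)"
  have z: "z \<in> interior W" using interiorI[OF u(1), of z] u y unfolding z_def by simp
  have zpq: "z \<in> closed_segment (x0 - 1, y) (x1 + 1, y)"
    using u(2) \<open>fst u \<le> x1\<close> unfolding z_def by (simp add: mem_horizontal_segment)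
  have "(x0 - 1, y) \<notin> interior W" "(x1 + 1, y) \<notin> interior W"
    using interior_in_open_box[of "(x0 - 1, y)"] interior_in_open_box[of "(x1 + 1, y)"] by auto
  then obtain s w where "s \<in> S" "w \<in> s" "w \<in> closed_segment (x0 - 1, y) (x1 + 1, y)"
    using skeleton_meets_axis_segment[OF sk, of snd, OF _ _ _ _ zpq z] by auto
  moreover from this(3) have "snd w = y" by (simp add: mem_horizontal_segment)
  ultimately show ?thesis by blast
qed

lemma skeleton_meets_vertical_line:
  assumes sk: "skeleton W S" and x: "x0 < x" "x < x1"
  shows "\<exists>s\<in>S. \<exists>w\<in>s. fst w = x"
proof -
  obtain u where u: "u \<in> W" "fst u = x1" "y0 < snd u" using right_reached by blast
  have "snd u \<le> y1" using u(1) W_subset by (auto simp: mem_cbox_pair)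
  define z where "z = (x, (y0 + snd u) / 2)"
  have z: "z \<in> interior W" using interiorI[OF u(1), of z] u x unfolding z_def by simp
  have zpq: "z \<in> closed_segment (x, y0 - 1) (x, y1 + 1)"
    using u(3) \<open>snd u \<le> y1\<close> unfolding z_def by (simp add: mem_vertical_segment)
  have "(x, y0 - 1) \<notin> interior W" "(x, y1 + 1) \<notin> interior W"
    using interior_in_open_box[of "(x, y0 - 1)"] interior_in_open_box[of "(x, y1 + 1)"] by auto
  then obtain s w where "s \<in> S" "w \<in> s" "w \<in> closed_segment (x, y0 - 1) (x, y1 + 1)"
    using skeleton_meets_axis_segment[OF sk, of fst, OF _ _ _ _ zpq z] by auto
  moreover from this(3) have "fst w = x" by (simp add: mem_vertical_segment)
  ultimately show ?thesis by blast
qed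

lemma not_skeleton_empty: "\<not> skeleton W {}"
proof
  assume "skeleton W {}"
  moreover have "y0 < (y0 + y1) / 2" "(y0 + y1) / 2 < y1" using y_less by simp_all
  ultimately show False using skeleton_meets_horizontal_line by blast
qed

lemma skeleton_singleton_spans_box:
  assumes sk: "skeleton W {s}"
  obtains a b where "s = closed_segment a b" "{fst a, fst b} = {x0, x1}" "{snd a, snd b} = {y0, y1}"
proof -
  have "is_segment s" using sk unfolding skeleton_def by simp
  then obtain a b where s: "s = closed_segment a b" unfolding is_segment_def by blast
  have "closed_segment a b \<subseteq> W" using sk unfolding skeleton_def s by simp
  then have "a \<in> cbox (x0, y0) (x1, y1)" "b \<in> cbox (x0, y0) (x1, y1)"
    using W_subset ends_in_segment by blast+
  then have box: "x0 \<le> fst a" "fst a \<le> x1" "y0 \<le> snd a" "snd a \<le> y1"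
    "x0 \<le> fst b" "fst b \<le> x1" "y0 \<le> snd b" "snd b \<le> y1"
    unfolding mem_cbox_pair by simp_all
  have "{fst a, fst b} = {x0, x1}"
  proof (rule endpoints_span_interval[OF x_less box(1,2,5,6)])
    fix x assume "x0 < x" "x < x1"
    then obtain w where "w \<in> s" "fst w = x" using skeleton_meets_vertical_line[OF sk] by blast
    then show "min (fst a) (fst b) \<le> x \<and> x \<le> max (fst a) (fst b)"
      using closed_segment_coord_bounds[of w a b] unfolding s by simp
  qed
  moreover have "{snd a, snd b} = {y0, y1}"
  proof (rule endpoints_span_interval[OF y_less box(3,4,7,8)])
    fix y assume "y0 < y" "y < y1"
    then obtain w where "w \<in> s" "snd w = y" using skeleton_meets_horizontal_line[OF sk] by blast
    then show "min (snd a) (snd b) \<le> y \<and> y \<le> max (snd a) (snd b)"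
      using closed_segment_coord_bounds[of w a b] unfolding s by simp
  qed
  ultimately show ?thesis using that s by blast
qed

end

section \<open>Rectilinear polygons\<close>

lemma prev_index:
  fixes k n :: nat
  assumes "k < n"
  shows "(k + n - 1) mod n = (if k = 0 then n - 1 else k - 1)"
    "Suc ((k + n - 1) mod n) mod n = k"
proof -
  show prev: "(k + n - 1) mod n = (if k = 0 then n - 1 else k - 1)"
  proof (cases k)
    case (Suc j)
    then have "k + n - 1 = j + n" by simp
    then show ?thesis using Suc assms by simp
  qed (use assms in simp)
  then show "Suc ((k + n - 1) mod n) mod n = k" using assms by (cases k) auto
qed

lemma obstacle_consecutive_vertices:
  assumes ob: "obstacle vs" and k: "k < length vs"
  defines "pk \<equiv> (k + length vs - 1) mod length vs" and "sk \<equiv> Suc k mod length vs"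
  shows "pk < length vs" "sk < length vs" "pk \<noteq> k" "nxt vs pk = vs!k" "nxt vs k = vs!sk"
    "vs!pk \<noteq> vs!k" "vs!sk \<noteq> vs!k" "\<not> collinear {vs!pk, vs!k, vs!sk}"
proof -
  have n3: "length vs \<ge> 3" and dis: "distinct vs"
    using ob unfolding obstacle_def simple_polygon_def by auto
  have idx: "pk < length vs" "sk < length vs" "pk \<noteq> k" "sk \<noteq> k" "pk \<noteq> sk"
    unfolding pk_def sk_def using n3 k prev_index(1)[OF k] by (auto simp: mod_Suc)
  then show "pk < length vs" "sk < length vs" "pk \<noteq> k" by simp_all
  show "nxt vs pk = vs!k" "nxt vs k = vs!sk"
    unfolding nxt_def pk_def sk_def using prev_index(2)[OF k] by simp_all
  have "vs!pk \<noteq> vs!k" "vs!sk \<noteq> vs!k" "vs!pk \<noteq> vs!sk"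
    using idx k dis by (auto simp: nth_eq_iff_index_eq)
  then show "vs!pk \<noteq> vs!k" "vs!sk \<noteq> vs!k" "\<not> collinear {vs!pk, vs!k, vs!sk}"
    using ob idx k unfolding obstacle_def general_position_def by auto
qed

lemma obstacle_vertex_edges:
  assumes ob: "obstacle vs" and rl: "rectilinear vs" and k: "k < length vs"
  obtains ih iv wh wv where "{ih, iv} = {k, (k + length vs - 1) mod length vs}" "ih \<noteq> iv"
    "edge_seg vs ih = closed_segment (vs!k) wh" "snd wh = snd (vs!k)" "fst wh \<noteq> fst (vs!k)"
    "horiz_edge vs ih"
    "edge_seg vs iv = closed_segment (vs!k) wv" "fst wv = fst (vs!k)" "snd wv \<noteq> snd (vs!k)"
    "vert_edge vs iv"
proof -
  define pk where "pk = (k + length vs - 1) mod length vs"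
  define sk where "sk = Suc k mod length vs"
  note c = obstacle_consecutive_vertices[OF ob k, folded pk_def sk_def]
  have r1: "fst (vs!pk) = fst (vs!k) \<or> snd (vs!pk) = snd (vs!k)"
    using rl c(1,4) unfolding rectilinear_def by metis
  have r2: "fst (vs!k) = fst (vs!sk) \<or> snd (vs!k) = snd (vs!sk)"
    using rl k c(5) unfolding rectilinear_def by metis
  have e: "edge_seg vs pk = closed_segment (vs!k) (vs!pk)"
    "edge_seg vs k = closed_segment (vs!k) (vs!sk)"
    unfolding edge_seg_def c(4,5) by (simp_all add: closed_segment_commute)
  show ?thesis
  proof (cases "snd (vs!pk) = snd (vs!k)")
    case True
    then have "fst (vs!k) = fst (vs!sk)" "snd (vs!k) \<noteq> snd (vs!sk)" "fst (vs!pk) \<noteq> fst (vs!k)"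
      using r2 c(6-8) collinear_axis_parallel[of snd "vs!pk" "vs!k" "vs!sk"]
      by (auto simp: prod_eq_iff)
    then show ?thesis
      by (intro that[of pk k "vs!pk" "vs!sk"])
        (use c True e in \<open>simp_all add: pk_def horiz_edge_def vert_edge_def insert_commute\<close>)
  next
    case False
    then have "fst (vs!pk) = fst (vs!k)" using r1 by auto
    moreover from this have "snd (vs!k) = snd (vs!sk)" "fst (vs!k) \<noteq> fst (vs!sk)"
      using r2 c(6-8) collinear_axis_parallel[of fst "vs!pk" "vs!k" "vs!sk"]
      by (auto simp: prod_eq_iff)
    ultimately show ?thesis
      by (intro that[of k pk "vs!sk" "vs!pk"])
        (use c False e in \<open>simp_all add: pk_def horiz_edge_def vert_edge_def\<close>)
  qed
qed
lemma obstacle_edges_at_vertex: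
  assumes ob: "obstacle vs" and k: "k < length vs" and l: "l < length vs"
  shows "vs!k \<in> {vs!l, nxt vs l} \<longleftrightarrow> l \<in> {k, (k + length vs - 1) mod length vs}"
proof -
  define n where "n = length vs"
  have n3: "n \<ge> 3" and dis: "distinct vs"
    using ob unfolding obstacle_def simple_polygon_def n_def by auto
  have kn: "k < n" "l < n" using k l unfolding n_def by auto
  have "vs!k = vs!l \<longleftrightarrow> l = k" using dis kn unfolding n_def by (auto simp: nth_eq_iff_index_eq)
  moreover have "vs!k = nxt vs l \<longleftrightarrow> l = (k + n - 1) mod n"
  proof -
    have "Suc l mod n < n" using n3 by simp
    then have "vs!k = nxt vs l \<longleftrightarrow> k = Suc l mod n"
      using dis kn unfolding nxt_def n_def by (auto simp: nth_eq_iff_index_eq)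
    also have "\<dots> \<longleftrightarrow> l = (k + n - 1) mod n"
      using kn prev_index[OF kn(1)] by (auto simp: mod_Suc split: if_splits)
    finally show ?thesis .
  qed
  ultimately show ?thesis unfolding n_def by auto
qed

lemma horizontal_segment_in_box_frontier:
  fixes a b :: pt
  assumes "snd a = snd b" "fst a \<noteq> fst b" "closed_segment a b \<subseteq> frontier (cbox (x0, y0) (x1, y1))"
  shows "snd a = y0 \<or> snd a = y1"
proof (rule ccontr)
  assume side: "\<not> (snd a = y0 \<or> snd a = y1)"
  have on_vertical_side: "fst w = x0 \<or> fst w = x1" if "w \<in> closed_segment a b" for w
  proof -
    have "w \<in> cbox (x0, y0) (x1, y1)" "w \<notin> box (x0, y0) (x1, y1)"
      using assms(3) that frontier_cbox by auto
    moreover have "snd w = snd a" using that assms(1) by (simp add: mem_horizontal_segment)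
    ultimately show ?thesis using side by (auto simp: mem_cbox_pair mem_box_pair)
  qed
  define m where "m = ((fst a + fst b) / 2, snd a)"
  have "m \<in> closed_segment a b"
    using assms(1) unfolding m_def by (auto simp: mem_horizontal_segment min_def max_def)
  then show False
    using on_vertical_side[of a] on_vertical_side[of b] on_vertical_side[of m] assms(2)
    unfolding m_def by auto
qed

lemma vertical_segment_in_box_frontier:
  fixes a b :: pt
  assumes "fst a = fst b" "snd a \<noteq> snd b" "closed_segment a b \<subseteq> frontier (cbox (x0, y0) (x1, y1))"
  shows "fst a = x0 \<or> fst a = x1"
proof (rule ccontr)
  assume side: "\<not> (fst a = x0 \<or> fst a = x1)"
  have on_horizontal_side: "snd w = y0 \<or> snd w = y1" if "w \<in> closed_segment a b" for w
  proof -
    have "w \<in> cbox (x0, y0) (x1, y1)" "w \<notin> box (x0, y0) (x1, y1)"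
      using assms(3) that frontier_cbox by auto
    moreover have "fst w = fst a" using that assms(1) by (simp add: mem_vertical_segment)
    ultimately show ?thesis using side by (auto simp: mem_cbox_pair mem_box_pair)
  qed
  define m where "m = (fst a, (snd a + snd b) / 2)"
  have "m \<in> closed_segment a b"
    using assms(1) unfolding m_def by (auto simp: mem_vertical_segment min_def max_def)
  then show False
    using on_horizontal_side[of a] on_horizontal_side[of b] on_horizontal_side[of m] assms(2)
    unfolding m_def by auto
qed

section \<open>L-obstacles\<close>

locale L_obstacle_geometry =
  fixes vs :: "pt list"
  assumes L: "L_obstacle vs"
begin

abbreviation W :: "pt set" where "W \<equiv> region vs"

definition bx0 :: real where "bx0 = Inf (fst ` W)"
definition bx1 :: real where "bx1 = Sup (fst ` W)"
definition by0 :: real where "by0 = Inf (snd ` W)"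
definition by1 :: real where "by1 = Sup (snd ` W)"

lemma obstacle: "obstacle vs" and rectilinear: "rectilinear vs" and rect_convex: "rect_convex W"
  and three_extreme_corners: "card {v. extreme_corner vs v} = 3"
  using L unfolding L_obstacle_def by auto

lemma length_ge_3: "length vs \<ge> 3"
  using obstacle unfolding obstacle_def simple_polygon_def by simp

lemma edge_subset_W: "k < length vs \<Longrightarrow> edge_seg vs k \<subseteq> W"
  unfolding region_def poly_boundary_def by auto

lemma vertex_in_W:
  assumes "v \<in> set vs"
  shows "v \<in> W"
proof -
  obtain k where "k < length vs" "v = vs!k" using assms by (auto simp: in_set_conv_nth)
  then show ?thesis using edge_subset_W[of k] unfolding edge_seg_def by auto
qed

lemma compact_boundary: "compact (poly_boundary vs)"
  unfolding poly_boundary_def edge_seg_def by (intro compact_UN) auto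

lemma W_bounded: "bounded W"
proof -
  have "bounded (poly_boundary vs)" by (rule compact_imp_bounded[OF compact_boundary])
  then show ?thesis unfolding region_def using bounded_inside by simp
qed

lemma W_subset_box: "W \<subseteq> cbox (bx0, by0) (bx1, by1)"
proof
  fix w assume w: "w \<in> W"
  have "bdd_below (fst ` W)" "bdd_above (fst ` W)" "bdd_below (snd ` W)" "bdd_above (snd ` W)"
    using bounded_fst[OF W_bounded] bounded_snd[OF W_bounded]
      bounded_imp_bdd_below bounded_imp_bdd_above by auto
  then show "w \<in> cbox (bx0, by0) (bx1, by1)"
    using w unfolding mem_cbox_pair bx0_def bx1_def by0_def by1_def
    by (auto intro: cInf_lower cSup_upper)
qed

lemma bbox_eq: "bbox W = cbox (bx0, by0) (bx1, by1)"
  unfolding bbox_def bx0_def bx1_def by0_def by1_def ..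

lemma inside_subset_box: "inside (poly_boundary vs) \<subseteq> box (bx0, by0) (bx1, by1)"
proof -
  have "inside (poly_boundary vs) \<subseteq> interior W"
    using open_inside[OF compact_imp_closed[OF compact_boundary]]
    unfolding region_def by (simp add: interior_maximal)
  also have "\<dots> \<subseteq> box (bx0, by0) (bx1, by1)"
    using interior_mono[OF W_subset_box] by simp
  finally show ?thesis .
qed

lemma extreme_corner_at_box_corner:
  assumes "extreme_corner vs v"
  shows "fst v \<in> {bx0, bx1} \<and> snd v \<in> {by0, by1}"
proof -
  obtain i j where ij: "i \<noteq> j" "extreme_edge vs i" "extreme_edge vs j"
    "v \<in> {vs!i, nxt vs i}" "v \<in> {vs!j, nxt vs j}" and "v \<in> set vs"
    using assms unfolding extreme_corner_def by blast
  obtain k where k: "k < length vs" "v = vs!k" using \<open>v \<in> set vs\<close> by (auto simp: in_set_conv_nth)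
  have "i < length vs" "j < length vs" using ij(2,3) unfolding extreme_edge_def by auto
  then have "i \<in> {k, (k + length vs - 1) mod length vs}"
    "j \<in> {k, (k + length vs - 1) mod length vs}"
    using obstacle_edges_at_vertex[OF obstacle k(1)] ij(4,5) unfolding k(2) by blast+
  then have ij_k: "{i, j} = {k, (k + length vs - 1) mod length vs}" using ij(1) by fastforce
  obtain ih iv wh wv where ihiv: "{ih, iv} = {k, (k + length vs - 1) mod length vs}" "ih \<noteq> iv"
    and h: "edge_seg vs ih = closed_segment (vs!k) wh" "snd wh = snd (vs!k)" "fst wh \<noteq> fst (vs!k)"
      "horiz_edge vs ih"
    and v: "edge_seg vs iv = closed_segment (vs!k) wv" "fst wv = fst (vs!k)" "snd wv \<noteq> snd (vs!k)"
      "vert_edge vs iv"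
    by (rule obstacle_vertex_edges[OF obstacle rectilinear k(1)])
  have "ih \<in> {i, j}" "iv \<in> {i, j}" using ihiv(1) unfolding ij_k by blast+
  then have "extreme_edge vs ih" "extreme_edge vs iv" using ij(2,3) by blast+
  then have "closed_segment (vs!k) wh \<subseteq> frontier (cbox (bx0, by0) (bx1, by1))"
    "closed_segment (vs!k) wv \<subseteq> frontier (cbox (bx0, by0) (bx1, by1))"
    using h(1) v(1) unfolding extreme_edge_def bbox_eq by auto
  then show ?thesis
    using horizontal_segment_in_box_frontier[of "vs!k" wh]
      vertical_segment_in_box_frontier[of "vs!k" wv]
      h v k(2) by auto
qed

lemma box_corner_vertex_edges:
  assumes v: "v \<in> set vs" and corner: "fst v \<in> {bx0, bx1}" "snd v \<in> {by0, by1}"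
  obtains ih iv wh wv where "ih \<noteq> iv" "extreme_edge vs ih" "extreme_edge vs iv"
    "edge_seg vs ih = closed_segment v wh" "snd wh = snd v" "fst wh \<noteq> fst v" "horiz_edge vs ih"
    "edge_seg vs iv = closed_segment v wv" "fst wv = fst v" "snd wv \<noteq> snd v" "vert_edge vs iv"
    "v \<in> {vs!ih, nxt vs ih}" "v \<in> {vs!iv, nxt vs iv}"
proof -
  obtain k where k: "k < length vs" "v = vs!k" using v by (auto simp: in_set_conv_nth)
  obtain ih iv wh wv where ihiv: "{ih, iv} = {k, (k + length vs - 1) mod length vs}" "ih \<noteq> iv"
    and h: "edge_seg vs ih = closed_segment v wh" "snd wh = snd v" "fst wh \<noteq> fst v"
      "horiz_edge vs ih"
    and ve: "edge_seg vs iv = closed_segment v wv" "fst wv = fst v" "snd wv \<noteq> snd v"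
      "vert_edge vs iv"
    by (rule obstacle_vertex_edges[OF obstacle rectilinear k(1)]) (simp_all add: k(2))
  have "(k + length vs - 1) mod length vs < length vs"
    using k(1) by (intro mod_less_divisor) linarith
  then have len: "ih < length vs" "iv < length vs"
    using ihiv(1) k(1) by (metis insert_iff singletonD)+
  have "extreme_edge vs ih"
    unfolding extreme_edge_def bbox_eq
    using len(1) h(1,2) corner edge_subset_W[OF len(1)] W_subset_box
    by (auto intro!: box_frontierI simp: mem_horizontal_segment)
  moreover have "extreme_edge vs iv"
    unfolding extreme_edge_def bbox_eq
    using len(2) ve(1,2) corner edge_subset_W[OF len(2)] W_subset_box
    by (auto intro!: box_frontierI simp: mem_vertical_segment)
  moreover have "v \<in> {vs!ih, nxt vs ih}" "v \<in> {vs!iv, nxt vs iv}"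
    using obstacle_edges_at_vertex[OF obstacle k(1)] len ihiv(1) k(2) by blast+
  ultimately show ?thesis using that ihiv(2) h ve by blast
qed

lemma box_corner_extreme_corner:
  assumes vW: "v \<in> W" and corner: "fst v \<in> {bx0, bx1}" "snd v \<in> {by0, by1}"
  shows "extreme_corner vs v"
proof -
  have "v \<notin> box (bx0, by0) (bx1, by1)" using corner by (auto simp: mem_box_pair)
  then have "v \<in> poly_boundary vs" using vW inside_subset_box unfolding region_def by blast
  then obtain k where k: "k < length vs" "v \<in> closed_segment (vs!k) (nxt vs k)"
    unfolding poly_boundary_def edge_seg_def by blast
  define a b where "a = vs!k" and "b = nxt vs k"
  have "Suc k mod length vs < length vs" using k(1) by (intro mod_less_divisor) linarith
  then have ab: "a \<in> set vs" "b \<in> set vs" unfolding a_def b_def nxt_def using k(1) by simp_all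
  then have "a \<in> cbox (bx0, by0) (bx1, by1)" "b \<in> cbox (bx0, by0) (bx1, by1)"
    using vertex_in_W W_subset_box by blast+
  moreover have "fst a = fst b \<or> snd a = snd b"
    using rectilinear k(1) unfolding rectilinear_def a_def b_def by blast
  ultimately have "v = a \<or> v = b"
    using k(2) corner unfolding a_def[symmetric] b_def[symmetric]
    by (auto simp: mem_cbox_pair mem_vertical_segment mem_horizontal_segment prod_eq_iff
      min_def max_def split: if_splits)
  then have "v \<in> set vs" using ab by blast
  obtain ih iv where "ih \<noteq> iv" "extreme_edge vs ih" "extreme_edge vs iv"
    "v \<in> {vs!ih, nxt vs ih}" "v \<in> {vs!iv, nxt vs iv}"
    using box_corner_vertex_edges[OF \<open>v \<in> set vs\<close> corner] by metis
  then show ?thesis unfolding extreme_corner_def using \<open>v \<in> set vs\<close> by blast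
qed

lemma box_corner_edges:
  assumes "(x, y) \<in> W" "x \<in> {bx0, bx1}" "y \<in> {by0, by1}"
  obtains ih iv where
    "extreme_edge vs ih" "horiz_edge vs ih" "(x, y) \<in> edge_seg vs ih" "\<forall>w\<in>edge_seg vs ih. snd w = y"
    "extreme_edge vs iv" "vert_edge vs iv" "(x, y) \<in> edge_seg vs iv" "\<forall>w\<in>edge_seg vs iv. fst w = x"
proof -
  have "(x, y) \<in> set vs"
    using box_corner_extreme_corner[OF assms(1)] assms(2,3) unfolding extreme_corner_def by simp
  then obtain ih iv wh wv where "ih \<noteq> iv" "extreme_edge vs ih" "extreme_edge vs iv"
    "edge_seg vs ih = closed_segment (x, y) wh" "snd wh = y" "fst wh \<noteq> x" "horiz_edge vs ih"
    "edge_seg vs iv = closed_segment (x, y) wv" "fst wv = x" "snd wv \<noteq> y" "vert_edge vs iv"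
    "(x, y) \<in> {vs!ih, nxt vs ih}" "(x, y) \<in> {vs!iv, nxt vs iv}"
    by (rule box_corner_vertex_edges) (use assms(2,3) in simp_all)
  then show ?thesis
    by (intro that[of ih iv]) (simp_all add: mem_horizontal_segment mem_vertical_segment)
qed

definition box_corners :: "pt set" where "box_corners = {(bx0, by0), (bx0, by1), (bx1, by0), (bx1, by1)}"

lemma extreme_corners_eq: "{v. extreme_corner vs v} = box_corners \<inter> W"
proof (intro set_eqI iffI)
  fix v assume "v \<in> {v. extreme_corner vs v}"
  then have "extreme_corner vs v" by simp
  then have "v \<in> W" "fst v \<in> {bx0, bx1}" "snd v \<in> {by0, by1}"
    using extreme_corner_at_box_corner vertex_in_W unfolding extreme_corner_def by blast+
  then show "v \<in> box_corners \<inter> W" unfolding box_corners_def by (cases v) auto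
next
  fix v assume "v \<in> box_corners \<inter> W"
  then show "v \<in> {v. extreme_corner vs v}"
    using box_corner_extreme_corner unfolding box_corners_def by auto
qed

lemma card_box_corners_W: "card (box_corners \<inter> W) = 3"
  using three_extreme_corners extreme_corners_eq by simp

lemma box_nondegenerate: "bx0 < bx1" "by0 < by1"
proof -
  have "vs \<noteq> []" using length_ge_3 by auto
  then have "vs!0 \<in> W" using vertex_in_W[OF nth_mem, of 0] by simp
  then have le: "bx0 \<le> bx1" "by0 \<le> by1" using W_subset_box by (auto simp: mem_cbox_pair)
  have "card (box_corners \<inter> W) \<le> card box_corners"
    by (rule card_mono) (auto simp: box_corners_def)
  then have three: "3 \<le> card box_corners" using card_box_corners_W by simp
  show "bx0 < bx1"
  proof (rule ccontr)
    assume "\<not> bx0 < bx1"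
    then have "box_corners = {(bx0, by0), (bx0, by1)}" using le unfolding box_corners_def by auto
    then show False using three by (simp add: card_insert_if split: if_splits)
  qed
  show "by0 < by1"
  proof (rule ccontr)
    assume "\<not> by0 < by1"
    then have "box_corners = {(bx0, by0), (bx1, by0)}" using le unfolding box_corners_def by auto
    then show False using three by (simp add: card_insert_if split: if_splits)
  qed
qed

definition M :: pt where "M = the_elem (box_corners - W)"

lemma box_corners_minus_W: "box_corners - W = {M}"
proof -
  have "card box_corners = 4" unfolding box_corners_def using box_nondegenerate by simp
  moreover have "finite (box_corners \<inter> W)" unfolding box_corners_def by simp
  ultimately have "card (box_corners - W) = 1"
    using card_box_corners_W card_Diff_subset_Int[of box_corners W] by simp
  then obtain x where "box_corners - W = {x}" by (rule card_1_singletonE)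
  then show ?thesis unfolding M_def by simp
qed

lemma M_missing: "M \<in> box_corners" "M \<notin> W"
  using box_corners_minus_W by blast+

lemma box_corner_in_W: "c \<in> box_corners \<Longrightarrow> c \<noteq> M \<Longrightarrow> c \<in> W"
  using box_corners_minus_W by blast

text \<open>\<open>(ox, oy)\<close> is the corner of the bounding box opposite to the missing corner
  \<open>M = (mx, my)\<close>; the signs \<open>sx, sy\<close> make \<open>axis_flip sx sy\<close> send it to the lower left and
  \<open>M\<close> to the upper right corner of the reflected box.\<close>

definition mx :: real where "mx = fst M"
definition my :: real where "my = snd M"
definition ox :: real where "ox = bx0 + bx1 - mx"
definition oy :: real where "oy = by0 + by1 - my"
definition sx :: real where "sx = (if ox < mx then 1 else -1)"
definition sy :: real where "sy = (if oy < my then 1 else -1)"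

lemma M_eq: "M = (mx, my)" unfolding mx_def my_def by simp

lemma corner_coords:
  "ox = bx0 \<and> mx = bx1 \<or> ox = bx1 \<and> mx = bx0" "oy = by0 \<and> my = by1 \<or> oy = by1 \<and> my = by0"
  using M_missing(1) unfolding box_corners_def ox_def oy_def mx_def my_def by auto

lemma corner_coords_mem: "ox \<in> {bx0, bx1}" "mx \<in> {bx0, bx1}" "oy \<in> {by0, by1}" "my \<in> {by0, by1}"
  using corner_coords by auto

lemma box_corners_eq: "box_corners = {(ox, oy), (ox, my), (mx, oy), (mx, my)}"
  using corner_coords unfolding box_corners_def by auto

lemma corners_in_W: "(ox, oy) \<in> W" "(ox, my) \<in> W" "(mx, oy) \<in> W"
proof -
  have "ox \<noteq> mx" "oy \<noteq> my" using corner_coords box_nondegenerate by auto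
  moreover have "(ox, oy) \<in> box_corners" "(ox, my) \<in> box_corners" "(mx, oy) \<in> box_corners"
    using corner_coords unfolding box_corners_def by auto
  ultimately show "(ox, oy) \<in> W" "(ox, my) \<in> W" "(mx, oy) \<in> W"
    using box_corner_in_W M_eq by auto
qed

sublocale axis_reflection sx sy
  by unfold_locales (simp_all add: sx_def sy_def)

lemma sign_bounds: "sx * ox < sx * mx" "sy * oy < sy * my"
  using corner_coords box_nondegenerate unfolding sx_def sy_def by auto

lemma W_sign_bounds:
  assumes "w \<in> W"
  shows "sx * ox \<le> sx * fst w \<and> sx * fst w \<le> sx * mx \<and> sy * oy \<le> sy * snd w \<and> sy * snd w \<le> sy * my"
proof -
  have "w \<in> cbox (bx0, by0) (bx1, by1)" using assms W_subset_box by blast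
  then show ?thesis
    using corner_coords box_nondegenerate unfolding sx_def sy_def mem_cbox_pair by auto
qed

lemma opposite_sides_subset_W:
  "closed_segment (ox, oy) (ox, my) \<subseteq> W" "closed_segment (ox, oy) (mx, oy) \<subseteq> W"
  using rect_convex_axis_segment[OF rect_convex corners_in_W(1,2), of fst]
    rect_convex_axis_segment[OF rect_convex corners_in_W(1,3), of snd] by simp_all

lemma W_down_closed:
  assumes u: "u \<in> W"
    and x: "sx * ox \<le> sx * fst z" "sx * fst z \<le> sx * fst u"
    and y: "sy * oy \<le> sy * snd z" "sy * snd z \<le> sy * snd u"
  shows "z \<in> W"
proof -
  note bounds = W_sign_bounds[OF u]
  have "(ox, snd u) \<in> W"
    using opposite_sides_subset_W(1) sign_bounds_imp_segment[OF abs_sy, of oy "snd u" my] bounds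
    by (auto simp: closed_segment_same_fst)
  then have "closed_segment (ox, snd u) u \<subseteq> W"
    using rect_convex_axis_segment[OF rect_convex _ u, of _ snd] by simp
  then have upper: "(fst z, snd u) \<in> W"
    using sign_bounds_imp_segment[OF abs_sx x] by (auto simp: closed_segment_same_snd)
  have lower: "(fst z, oy) \<in> W"
    using opposite_sides_subset_W(2) sign_bounds_imp_segment[OF abs_sx, of ox "fst z" mx] x bounds
    by (auto simp: closed_segment_same_snd)
  have "closed_segment (fst z, oy) (fst z, snd u) \<subseteq> W"
    using rect_convex_axis_segment[OF rect_convex lower upper, of fst] by simp
  then show ?thesis
    using sign_bounds_imp_segment[OF abs_sy y] by (cases z) (auto simp: closed_segment_same_fst)
qed

lemma W_reaches_top: "\<exists>w\<in>W. snd w = my \<and> fst w \<noteq> ox"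
proof -
  have "fst (ox, my) \<in> {bx0, bx1}" "snd (ox, my) \<in> {by0, by1}" using corner_coords by auto
  moreover have "(ox, my) \<in> set vs"
    using box_corner_extreme_corner[OF corners_in_W(2)] calculation
    unfolding extreme_corner_def by blast
  ultimately obtain ih wh where "ih < length vs" "edge_seg vs ih = closed_segment (ox, my) wh"
    "snd wh = my" "fst wh \<noteq> ox"
    using box_corner_vertex_edges unfolding extreme_edge_def by (metis fst_conv snd_conv)
  then show ?thesis using edge_subset_W by (metis ends_in_segment(2) subsetD)
qed

lemma W_reaches_right: "\<exists>w\<in>W. fst w = mx \<and> snd w \<noteq> oy"
proof -
  have "fst (mx, oy) \<in> {bx0, bx1}" "snd (mx, oy) \<in> {by0, by1}" using corner_coords by auto
  moreover have "(mx, oy) \<in> set vs"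
    using box_corner_extreme_corner[OF corners_in_W(3)] calculation
    unfolding extreme_corner_def by blast
  ultimately obtain iv wv where "iv < length vs" "edge_seg vs iv = closed_segment (mx, oy) wv"
    "fst wv = mx" "snd wv \<noteq> oy"
    using box_corner_vertex_edges unfolding extreme_edge_def by (metis fst_conv snd_conv)
  then show ?thesis using edge_subset_W by (metis ends_in_segment(2) subsetD)
qed

sublocale normalized: spanning_staircase "sx * ox" "sx * mx" "sy * oy" "sy * my" "flip ` W"
proof
  show "sx * ox < sx * mx" "sy * oy < sy * my" by (fact sign_bounds)+
  show "flip ` W \<subseteq> cbox (sx * ox, sy * oy) (sx * mx, sy * my)"
  proof
    fix z assume "z \<in> flip ` W"
    then obtain w where "w \<in> W" "z = flip w" by blast
    then show "z \<in> cbox (sx * ox, sy * oy) (sx * mx, sy * my)"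
      using W_sign_bounds[of w] by (simp add: mem_cbox_pair)
  qed
next
  fix u z
  assume "u \<in> flip ` W" "sx * ox \<le> fst z" "fst z \<le> fst u" "sy * oy \<le> snd z" "snd z \<le> snd u"
  then have "flip z \<in> W"
    using W_down_closed[of "flip u" "flip z"] by (auto simp: mem_flip_image_iff)
  then show "z \<in> flip ` W" by (simp add: mem_flip_image_iff)
next
  obtain w where w: "w \<in> W" "snd w = my" "fst w \<noteq> ox" using W_reaches_top by blast
  then have "sx * ox < sx * fst w" using W_sign_bounds[OF w(1)] by (auto simp: order_le_less)
  then show "\<exists>u\<in>flip ` W. sx * ox < fst u \<and> snd u = sy * my" using w by force
next
  obtain w where w: "w \<in> W" "fst w = mx" "snd w \<noteq> oy" using W_reaches_right by blast
  then have "sy * oy < sy * snd w" using W_sign_bounds[OF w(1)] by (auto simp: order_le_less)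
  then show "\<exists>u\<in>flip ` W. fst u = sx * mx \<and> sy * oy < snd u" using w by force
qed

lemma skeleton_nonempty: "skeleton W S \<Longrightarrow> S \<noteq> {}"
  using skeleton_flip_image[of W S] normalized.not_skeleton_empty by auto

lemma skeleton_opposite_sides:
  "skeleton W {closed_segment (ox, oy) (ox, my), closed_segment (ox, oy) (mx, oy)}"
proof -
  have "flip ` closed_segment (ox, oy) (ox, my) = normalized.left_side"
    "flip ` closed_segment (ox, oy) (mx, oy) = normalized.bottom_side"
    by (simp_all add: flip_closed_segment)
  moreover have "flip ` closed_segment (ox, oy) (ox, my) \<subseteq> flip ` W"
    "flip ` closed_segment (ox, oy) (mx, oy) \<subseteq> flip ` W"
    by (simp_all add: image_mono opposite_sides_subset_W)
  ultimately have "skeleton (flip ` W)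
      (image flip ` {closed_segment (ox, oy) (ox, my), closed_segment (ox, oy) (mx, oy)})"
    using normalized.skeleton_sides by simp
  from skeleton_flip_image[OF this] show ?thesis by (simp add: image_image)
qed

lemma cross_opposite_sides:
  "cross vs {closed_segment (ox, oy) (ox, my), closed_segment (ox, oy) (mx, oy)}"
proof -
  have neq: "ox \<noteq> mx" "oy \<noteq> my" using sign_bounds by auto
  obtain ihO ivO where O: "extreme_edge vs ihO" "horiz_edge vs ihO" "(ox, oy) \<in> edge_seg vs ihO"
    "\<forall>w\<in>edge_seg vs ihO. snd w = oy"
    "extreme_edge vs ivO" "vert_edge vs ivO" "(ox, oy) \<in> edge_seg vs ivO"
    "\<forall>w\<in>edge_seg vs ivO. fst w = ox"
    by (rule box_corner_edges[OF corners_in_W(1) corner_coords_mem(1,3)])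
  obtain ihA ivA where A: "extreme_edge vs ihA" "horiz_edge vs ihA" "(ox, my) \<in> edge_seg vs ihA"
    "\<forall>w\<in>edge_seg vs ihA. snd w = my"
    "extreme_edge vs ivA" "vert_edge vs ivA" "(ox, my) \<in> edge_seg vs ivA"
    "\<forall>w\<in>edge_seg vs ivA. fst w = ox"
    by (rule box_corner_edges[OF corners_in_W(2) corner_coords_mem(1,4)])
  obtain ihC ivC where C: "extreme_edge vs ihC" "horiz_edge vs ihC" "(mx, oy) \<in> edge_seg vs ihC"
    "\<forall>w\<in>edge_seg vs ihC. snd w = oy"
    "extreme_edge vs ivC" "vert_edge vs ivC" "(mx, oy) \<in> edge_seg vs ivC"
    "\<forall>w\<in>edge_seg vs ivC. fst w = mx"
    by (rule box_corner_edges[OF corners_in_W(3) corner_coords_mem(2,3)])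
  have "ihO \<noteq> ihA" using O(4) A(3) neq by auto
  then have "\<exists>i j a b. i \<noteq> j \<and> extreme_edge vs i \<and> extreme_edge vs j \<and>
      horiz_edge vs i \<and> horiz_edge vs j \<and> a \<in> edge_seg vs i \<and> b \<in> edge_seg vs j \<and>
      closed_segment (ox, oy) (ox, my) = closed_segment a b"
    using O(1-3) A(1-3)
    by (intro exI[of _ ihO] exI[of _ ihA] exI[of _ "(ox, oy)"] exI[of _ "(ox, my)"]) simp
  moreover have "ivO \<noteq> ivC" using O(8) C(7) neq by auto
  then have "\<exists>i j a b. i \<noteq> j \<and> extreme_edge vs i \<and> extreme_edge vs j \<and>
      vert_edge vs i \<and> vert_edge vs j \<and> a \<in> edge_seg vs i \<and> b \<in> edge_seg vs j \<and>
      closed_segment (ox, oy) (mx, oy) = closed_segment a b"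
    using O(5-7) C(5-7)
    by (intro exI[of _ ivO] exI[of _ ivC] exI[of _ "(ox, oy)"] exI[of _ "(mx, oy)"]) simp
  moreover have "is_segment (closed_segment (ox, oy) (ox, my))"
    "is_segment (closed_segment (ox, oy) (mx, oy))"
    unfolding is_segment_def using neq by auto
  ultimately show ?thesis
    unfolding cross_def using opposite_sides_subset_W
    by (intro exI[of _ "closed_segment (ox, oy) (ox, my)"]
        exI[of _ "closed_segment (ox, oy) (mx, oy)"]) simp
qed

lemma skeleton_singleton_diagonal:
  assumes "skeleton W {s}"
  shows "diagonal vs s"
proof -
  have "skeleton (flip ` W) {flip ` s}" using skeleton_flip_image[OF assms] by simp
  then obtain a' b' where s': "flip ` s = closed_segment a' b'"
    "{fst a', fst b'} = {sx * ox, sx * mx}" "{snd a', snd b'} = {sy * oy, sy * my}"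
    by (rule normalized.skeleton_singleton_spans_box)
  define a b where "a = flip a'" and "b = flip b'"
  have s: "s = closed_segment a b"
    using arg_cong[OF s'(1), of "image flip"] unfolding a_def b_def
    by (simp add: flip_closed_segment)
  have coords: "{fst a, fst b} = {ox, mx}" "{snd a, snd b} = {oy, my}"
    using s'(2,3) unfolding a_def b_def by (auto simp: doubleton_eq_iff)
  have "s \<subseteq> W" using assms unfolding skeleton_def by simp
  then have "a \<in> W" "b \<in> W" unfolding s by auto
  moreover have "fst a \<in> {bx0, bx1}" "fst b \<in> {bx0, bx1}" "snd a \<in> {by0, by1}" "snd b \<in> {by0, by1}"
    using coords corner_coords by (auto simp: doubleton_eq_iff)
  ultimately have "extreme_corner vs a" "extreme_corner vs b"
    using box_corner_extreme_corner by blast+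
  moreover have "fst a \<noteq> fst b" "snd a \<noteq> snd b"
    using coords sign_bounds by (auto simp: doubleton_eq_iff)
  ultimately show ?thesis unfolding diagonal_def using s \<open>s \<subseteq> W\<close> by blast
qed

lemma skeleton_card_ge_2:
  assumes "\<nexists>d. diagonal vs d" "finite S" "skeleton W S"
  shows "2 \<le> card S"
proof (rule ccontr)
  assume "\<not> 2 \<le> card S"
  moreover have "card S \<noteq> 0" using assms(2,3) skeleton_nonempty by simp
  ultimately have "card S = 1" by simp
  then obtain s where "S = {s}" by (rule card_1_singletonE)
  then show False using skeleton_singleton_diagonal assms(1,3) by blast
qed

lemma min_skeleton_diagonal:
  assumes "diagonal vs d"
  shows "min_skeleton W {d}"
proof -
  obtain a b where ab: "extreme_corner vs a" "extreme_corner vs b" "fst a \<noteq> fst b" "snd a \<noteq> snd b"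
    "d = closed_segment a b" "d \<subseteq> W"
    using assms unfolding diagonal_def by blast
  have "a \<in> box_corners - {M}" "b \<in> box_corners - {M}"
    using ab(1,2) extreme_corners_eq M_missing(2) by auto
  then have "a \<in> {(ox, oy), (ox, my), (mx, oy)}" "b \<in> {(ox, oy), (ox, my), (mx, oy)}"
    unfolding box_corners_eq M_eq by auto
  then have "a = (mx, oy) \<and> b = (ox, my) \<or> a = (ox, my) \<and> b = (mx, oy)"
    using ab(3,4) by auto
  then have "flip ` d = normalized.antidiagonal"
    using ab(5) by (auto simp: flip_closed_segment closed_segment_commute)
  moreover have "flip ` d \<subseteq> flip ` W" using ab(6) by blast
  ultimately have "skeleton (flip ` W) {flip ` d}" using normalized.skeleton_antidiagonal by simp
  then have "skeleton W {d}" using skeleton_flip_image[of "flip ` W" "{flip ` d}"] by simp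
  moreover have "card {d} \<le> card S" if "finite S" "skeleton W S" for S
    using that skeleton_nonempty by (simp add: Suc_leI card_gt_0_iff)
  ultimately show ?thesis unfolding min_skeleton_def by simp
qed

lemma min_skeleton_cross:
  assumes "\<nexists>d. diagonal vs d"
  shows "\<exists>S. cross vs S \<and> min_skeleton W S"
proof -
  let ?S = "{closed_segment (ox, oy) (ox, my), closed_segment (ox, oy) (mx, oy)}"
  have "(mx, oy) \<notin> closed_segment (ox, oy) (ox, my)"
    using sign_bounds by (auto simp: closed_segment_same_fst)
  then have "card ?S = 2" by (metis card_2_iff ends_in_segment(2))
  then have "min_skeleton W ?S"
    unfolding min_skeleton_def using skeleton_opposite_sides skeleton_card_ge_2[OF assms] by simp
  then show ?thesis using cross_opposite_sides by blast
qed

end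

theorem lemma7:
  fixes vs :: "(real \<times> real) list"
  assumes "L_obstacle vs"
  shows "(\<forall>d. diagonal vs d \<longrightarrow> min_skeleton (region vs) {d}) \<and>
         ((\<nexists>d. diagonal vs d) \<longrightarrow> (\<exists>S. cross vs S \<and> min_skeleton (region vs) S))"
proof -
  interpret L_obstacle_geometry vs by unfold_locales (fact assms)
  show ?thesis using min_skeleton_diagonal min_skeleton_cross by blast
qed

end
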